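(* Let $Z_t$ be a real-valued random variable with bounded density $f_{Z_t}$, let $V_t,U_t:\mathbb{R}\to\mathbb{R}$, $X_t=V_t(Z_t)^+$, $Y_t=U_t(Z_t)^+$, and let $Z_t^1,\dots,Z_t^n$ be i.i.d. copies of $Z_t$ with $\mathbf{X}_t=(X_t^i)_{i=1}^n$, $\mathbf{Y}_t=(Y_t^i)_{i=1}^n$, $X_t^i=V_t(Z_t^i)^+$, $Y_t^i=U_t(Z_t^i)^+$. Let $1\le p<\infty$ and $\eta\in(0,1]$. Then with probability at least $1-\eta$: (a) for any law-invariant exposure measure $\rho$, \[|\widehat\rho(\mathbf{X}_t)-\widehat\rho(\mathbf{Y}_t)|\le\left(\frac{\Vert f_{Z_t}\Vert_\infty}{\eta}\right)^{1/p}n^{1/p}\Vert V_t-U_t\Vert_{L^p(\mathbb{R})};\] (b) for any quantile-based exposure measure $\rho_m$ with $m$ absolutely continuous with density $f_m$, and $1/p+1/q=1$, \[|\widehat\rho_m(\mathbf{X}_t)-\widehat\rho_m(\mathbf{Y}_t)|\le\Vert f_m\Vert_{L^q(0,1)}\Vert f_{Z_t}\Vert_\infty^{1/p}\Vert V_t-U_t\Vert_{L^p(\mathbb{R})}+\sqrt[2p]{\frac{-\ln\eta}{n}}\,\Vert f_m\Vert_{L^q(0,1)}\Vert V_t-U_t\Vert_\infty.\]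
   Context: $x^+=\max\{x,0\}$. An exposure measure is a monotone, cash-additive ($\rho(X+c)=\rho(X)+c$) map from random variables on an atomless probability space to $\mathbb{R}\cup\{\infty\}$; law-invariant means $\rho(X)=\rho(F_X)$ depends only on the distribution. For a sample $\mathbf{x}=(x^i)_{i=1}^n$, $\widehat\rho(\mathbf{x})=\rho(F_{\mathbf{x}})$ with $F_{\mathbf{x}}(x)=\frac1n\sum_i\mathbb{1}_{\{x\ge x^i\}}$. The quantile function is $Q_X(u)=\inf\{x:F_X(x)\ge u\}$, and for a probability measure $m$ on $(0,1)$ the quantile-based exposure measure is $\rho_m(X)=\int_0^1Q_X(u)\,m(du)$, with empirical estimator $\widehat\rho_m(\mathbf{x})=\sum_{i=1}^nw_{n,i}x^{(i)}$, where $x^{(i)}$ is the $i$-th smallest element of the sample, $w_{n,i}=m\left(\left(\frac{i-1}{n},\frac in\right]\right)$ for $i<n$ and $w_{n,n}=m\left(\left(\frac{n-1}{n},1\right)\right)$. $\Vert\cdot\Vert_\infty$ is the supremum norm. *)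

theory Defs
  imports "HOL-Probability.Probability"
begin

definition atomless :: "'b measure \<Rightarrow> bool" where
  "atomless P \<longleftrightarrow> (\<forall>A\<in>sets P. 0 < measure P A \<longrightarrow>
      (\<exists>B\<in>sets P. B \<subseteq> A \<and> 0 < measure P B \<and> measure P B < measure P A))"

definition exposure_measure :: "'b measure \<Rightarrow> (('b \<Rightarrow> real) \<Rightarrow> ereal) \<Rightarrow> bool" where
  "exposure_measure P \<rho> \<longleftrightarrow>
     (\<forall>X\<in>borel_measurable P. \<rho> X \<noteq> -\<infinity>) \<and>
     (\<forall>X\<in>borel_measurable P. \<forall>Y\<in>borel_measurable P.
         (\<forall>\<omega>\<in>space P. X \<omega> \<le> Y \<omega>) \<longrightarrow> \<rho> X \<le> \<rho> Y) \<and>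
     (\<forall>X\<in>borel_measurable P. \<forall>c::real. \<rho> (\<lambda>\<omega>. X \<omega> + c) = \<rho> X + ereal c)"

definition law_invariant :: "'b measure \<Rightarrow> (('b \<Rightarrow> real) \<Rightarrow> ereal) \<Rightarrow> bool" where
  "law_invariant P \<rho> \<longleftrightarrow>
     (\<forall>X\<in>borel_measurable P. \<forall>Y\<in>borel_measurable P.
         distr P borel X = distr P borel Y \<longrightarrow> \<rho> X = \<rho> Y)"

definition emp_cdf :: "nat \<Rightarrow> (nat \<Rightarrow> real) \<Rightarrow> real \<Rightarrow> real" where
  "emp_cdf n x t = real (card {i. i < n \<and> x i \<le> t}) / real n"

text \<open>Empirical estimator rho(F_x): rho applied to a random variable on P with law F_x.\<close>
definition rho_hat :: "'b measure \<Rightarrow> (('b \<Rightarrow> real) \<Rightarrow> ereal) \<Rightarrow> nat \<Rightarrow> (nat \<Rightarrow> real) \<Rightarrow> ereal" where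
  "rho_hat P \<rho> n x = \<rho> (SOME W. W \<in> borel_measurable P \<and>
      (\<forall>t. measure P {\<omega>\<in>space P. W \<omega> \<le> t} = emp_cdf n x t))"

definition quantile_density :: "(real \<Rightarrow> real) \<Rightarrow> bool" where
  "quantile_density fm \<longleftrightarrow> fm \<in> borel_measurable borel \<and>
     (\<forall>u\<in>{0<..<1}. 0 \<le> fm u) \<and> set_integrable lborel {0<..<1::real} fm \<and>
     (LBINT u:{0<..<1::real}. fm u) = 1"

text \<open>i-th smallest element (1-based) of the sample x 0, ..., x (n-1).\<close>
definition order_stat :: "nat \<Rightarrow> (nat \<Rightarrow> real) \<Rightarrow> nat \<Rightarrow> real" where
  "order_stat n x i = sort (map x [0..<n]) ! (i - 1)"

definition rho_m_hat :: "(real \<Rightarrow> real) \<Rightarrow> nat \<Rightarrow> (nat \<Rightarrow> real) \<Rightarrow> real" where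
  "rho_m_hat fm n x =
     (\<Sum>i=1..n. (LBINT u=(real i - 1) / real n..real i / real n. fm u) * order_stat n x i)"

section \<open>Norms (ennreal-valued, so that infinite norms are allowed)\<close>

definition enn_powr :: "ennreal \<Rightarrow> real \<Rightarrow> ennreal" where
  "enn_powr x a = (if x = \<infinity> then \<infinity> else ennreal (enn2real x powr a))"

definition Lp_norm :: "'c measure \<Rightarrow> real \<Rightarrow> ('c \<Rightarrow> real) \<Rightarrow> ennreal" where
  "Lp_norm M p f = enn_powr (\<integral>\<^sup>+ x. ennreal (\<bar>f x\<bar> powr p) \<partial>M) (1 / p)"

definition Linf_norm_01 :: "(real \<Rightarrow> real) \<Rightarrow> ennreal" where
  "Linf_norm_01 f = Inf {c. AE u in lborel. u \<in> {0<..<1} \<longrightarrow> ennreal \<bar>f u\<bar> \<le> c}"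

definition Lq_norm_01 :: "ereal \<Rightarrow> (real \<Rightarrow> real) \<Rightarrow> ennreal" where
  "Lq_norm_01 q f = (if q = \<infinity> then Linf_norm_01 f
                     else Lp_norm (restrict_space lborel {0<..<1}) (real_of_ereal q) f)"

definition sup_norm :: "(real \<Rightarrow> real) \<Rightarrow> ennreal" where
  "sup_norm f = (SUP x. ennreal \<bar>f x\<bar>)"

end

theory Submission
  imports Defs
begin

text \<open>
  (a) On an atomless space every empirical law is the law of a step function on a partition
  into n cells of probability 1/n. Law invariance, monotonicity and cash additivity therefore
  make rho_hat 1-Lipschitz for the maximum distance between samples, and Markov's inequality
  with a union bound gives max_i |V(Z_i) - U(Z_i)|^p <= n ||f_Z||_inf ||V - U||_p^p / eta
  with probability at least 1 - eta.

  (b) rho_m_hat x - rho_m_hat y = sum_i w_i (x_(i) - y_(i)) is the integral of f_m against a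
  step function on (0,1), so Hoelder's inequality bounds it by ||f_m||_q times the p-th power
  mean of the differences of the order statistics. Pairing sorted samples minimises a convex
  cost (rearrangement inequality), so this mean is at most the empirical mean of
  |V(Z_j) - U(Z_j)|^p, whose expectation is at most ||f_Z||_inf ||V - U||_p^p; Hoeffding's
  inequality controls the deviation by ||V - U||_inf^p sqrt(-ln eta / 2n).
\<close>

section \<open>Atomless probability spaces\<close>

lemma (in prob_space) atomless_small_subset:
  assumes "atomless M" "A \<in> events" "0 < prob A" "0 < e"
  shows "\<exists>B\<in>events. B \<subseteq> A \<and> 0 < prob B \<and> prob B < e"
proof -
  have halving: "\<exists>B\<in>events. B \<subseteq> A \<and> 0 < prob B \<and> prob B \<le> prob A / 2^k" for k
  proof (induction k)
    case 0 then show ?case using assms by auto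
  next
    case (Suc k)
    then obtain B where B: "B \<in> events" "B \<subseteq> A" "0 < prob B" "prob B \<le> prob A / 2^k"
      by blast
    then obtain C where C: "C \<in> events" "C \<subseteq> B" "0 < prob C" "prob C < prob B"
      using assms(1) unfolding atomless_def by blast
    show ?case
    proof (cases "prob C \<le> prob B / 2")
      case True
      then show ?thesis using B C by (intro bexI[of _ C]) auto
    next
      case False
      have "prob (B - C) = prob B - prob C"
        using B C finite_measure_Diff by blast
      then show ?thesis using B C False by (intro bexI[of _ "B - C"]) auto
    qed
  qed
  obtain k where "prob A / e < 2^k"
    using real_arch_pow[of 2 "prob A / e"] by auto
  then have "prob A / 2^k < e"
    using assms(4) by (simp add: divide_less_eq mult.commute)
  moreover obtain B where "B \<in> events" "B \<subseteq> A" "0 < prob B" "prob B \<le> prob A / 2^k"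
    using halving by blast
  ultimately show ?thesis
    by (intro bexI[of _ B]) auto
qed

lemma (in finite_measure) exists_set_of_half_sup_measure:
  assumes "\<C> \<subseteq> sets M" "\<C> \<noteq> {}"
  shows "\<exists>C\<in>\<C>. \<forall>C'\<in>\<C>. measure M C' \<le> 2 * measure M C"
proof -
  define s where "s = Sup (measure M ` \<C>)"
  have bdd: "bdd_above (measure M ` \<C>)"
    using assms(1) by (intro bdd_aboveI[of _ "measure M (space M)"]) (auto intro: bounded_measure)
  then have le_s: "\<forall>C'\<in>\<C>. measure M C' \<le> s"
    by (auto simp: s_def intro: cSup_upper)
  show ?thesis
  proof (cases "s \<le> 0")
    case True
    obtain C where C: "C \<in> \<C>"
      using assms(2) by blast
    have "measure M C' \<le> 2 * measure M C" if "C' \<in> \<C>" for C'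
      using le_s[rule_format, OF that] True measure_nonneg[of M C] by linarith
    then show ?thesis
      using C by blast
  next
    case False
    then obtain C where "C \<in> \<C>" "s / 2 < measure M C"
      using less_cSup_iff[OF _ bdd, of "s / 2"] assms(2) by (auto simp: s_def)
    then show ?thesis using le_s by force
  qed
qed

lemma (in prob_space) exists_greedy_extension:
  assumes "B \<in> events" "B \<subseteq> A" "prob B \<le> t"
  shows "\<exists>B'. B' \<in> events \<and> B \<subseteq> B' \<and> B' \<subseteq> A \<and> prob B' \<le> t \<and>
    (\<forall>C\<in>events. C \<subseteq> A - B \<and> prob C \<le> t - prob B \<longrightarrow> prob C \<le> 2 * (prob B' - prob B))"
proof -
  let ?\<C> = "{C \<in> events. C \<subseteq> A - B \<and> prob C \<le> t - prob B}"
  have "{} \<in> ?\<C>" "?\<C> \<subseteq> events"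
    using assms by auto
  then obtain C where C: "C \<in> events" "C \<subseteq> A - B" "prob C \<le> t - prob B"
    and near_max: "\<forall>C'\<in>?\<C>. prob C' \<le> 2 * prob C"
    using exists_set_of_half_sup_measure[of ?\<C>] by blast
  have "prob (B \<union> C) = prob B + prob C"
    using C assms by (intro finite_measure_Union) auto
  moreover have "B \<union> C \<in> events" "B \<subseteq> B \<union> C" "B \<union> C \<subseteq> A"
    using C assms by auto
  ultimately show ?thesis
    using C(3) near_max by (intro exI[of _ "B \<union> C"]) auto
qed

lemma unbounded_of_uniform_increments:
  fixes f :: "nat \<Rightarrow> real"
  assumes "\<And>k. f k + d \<le> f (Suc k)" "0 < d"
  shows "\<exists>k. c < f k"
proof -
  have linear: "f 0 + real k * d \<le> f k" for k
  proof (induction k)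
    case (Suc k)
    then show ?case
      using assms(1)[of k] by (simp add: algebra_simps)
  qed simp
  obtain k where "(c - f 0) / d < real k"
    using reals_Archimedean2 by blast
  then have "c < f 0 + real k * d"
    using assms(2) by (simp add: field_simps)
  then show ?thesis
    using linear[of k] by (intro exI[of _ k]) linarith
qed

lemma (in prob_space) exists_greedy_sequence:
  assumes "0 \<le> t"
  obtains Bs where "incseq Bs" "\<And>k. Bs k \<in> events \<and> Bs k \<subseteq> A \<and> prob (Bs k) \<le> t"
    "\<And>k C. C \<in> events \<Longrightarrow> C \<subseteq> A - Bs k \<Longrightarrow> prob C \<le> t - prob (Bs k)
      \<Longrightarrow> prob C \<le> 2 * (prob (Bs (Suc k)) - prob (Bs k))"
proof -
  define good where "good B \<longleftrightarrow> B \<in> events \<and> B \<subseteq> A \<and> prob B \<le> t" for B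
  define nxt where "nxt B = (SOME B'. good B' \<and> B \<subseteq> B' \<and>
    (\<forall>C\<in>events. C \<subseteq> A - B \<and> prob C \<le> t - prob B \<longrightarrow> prob C \<le> 2 * (prob B' - prob B)))" for B
  have nxt: "good (nxt B) \<and> B \<subseteq> nxt B \<and>
      (\<forall>C\<in>events. C \<subseteq> A - B \<and> prob C \<le> t - prob B \<longrightarrow> prob C \<le> 2 * (prob (nxt B) - prob B))"
    if "good B" for B
  proof -
    have "\<exists>B'. good B' \<and> B \<subseteq> B' \<and>
        (\<forall>C\<in>events. C \<subseteq> A - B \<and> prob C \<le> t - prob B \<longrightarrow> prob C \<le> 2 * (prob B' - prob B))"
      using exists_greedy_extension[of B A t] that by (auto simp: good_def)
    then show ?thesis
      unfolding nxt_def by (rule someI_ex)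
  qed
  define Bs where "Bs k = (nxt ^^ k) {}" for k
  have Bs_Suc: "Bs (Suc k) = nxt (Bs k)" for k
    by (simp add: Bs_def)
  have good_Bs: "good (Bs k)" for k
  proof (induction k)
    case 0
    show ?case using assms by (simp add: Bs_def good_def)
  next
    case (Suc k)
    then show ?case using nxt by (simp add: Bs_Suc)
  qed
  show ?thesis
  proof (rule that)
    show "incseq Bs"
      by (rule incseq_SucI) (use good_Bs nxt in \<open>simp add: Bs_Suc\<close>)
  qed (use good_Bs nxt in \<open>auto simp: good_def Bs_Suc\<close>)
qed

text \<open>Sierpinski's theorem. If the limit of the greedy sequence fell short of t, a small set
  left over would be admissible at every step, forcing unbounded growth.\<close>

lemma (in prob_space) atomless_subset_of_measure:
  assumes al: "atomless M" and A: "A \<in> events" and t: "0 \<le> t" "t \<le> prob A"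
  shows "\<exists>B\<in>events. B \<subseteq> A \<and> prob B = t"
proof -
  obtain Bs where "incseq Bs" and Bs: "\<And>k. Bs k \<in> events \<and> Bs k \<subseteq> A \<and> prob (Bs k) \<le> t"
    and greedy: "\<And>k C. C \<in> events \<Longrightarrow> C \<subseteq> A - Bs k \<Longrightarrow> prob C \<le> t - prob (Bs k)
      \<Longrightarrow> prob C \<le> 2 * (prob (Bs (Suc k)) - prob (Bs k))"
    using exists_greedy_sequence[OF t(1), of A] by blast
  define B where "B = (\<Union>k. Bs k)"
  have B: "B \<in> events" "B \<subseteq> A"
    using Bs by (auto simp: B_def)
  have "(\<lambda>k. prob (Bs k)) \<longlonglongrightarrow> prob B"
    unfolding B_def using Bs \<open>incseq Bs\<close> by (intro finite_Lim_measure_incseq) auto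
  then have "prob B \<le> t"
    by (rule LIMSEQ_le_const2) (use Bs in auto)
  moreover have "\<not> prob B < t"
  proof
    assume lt: "prob B < t"
    have "prob (A - B) = prob A - prob B"
      using B A finite_measure_Diff by blast
    then obtain C where C: "C \<in> events" "C \<subseteq> A - B" "0 < prob C" "prob C < t - prob B"
      using atomless_small_subset[OF al, of "A - B" "t - prob B"] B A lt t by auto
    have "prob (Bs k) + prob C / 2 \<le> prob (Bs (Suc k))" for k
    proof -
      have "prob (Bs k) \<le> prob B"
        using B by (intro finite_measure_mono) (auto simp: B_def)
      then have "prob C \<le> 2 * (prob (Bs (Suc k)) - prob (Bs k))"
        using C by (intro greedy) (auto simp: B_def)
      then show ?thesis
        by simp
    qed
    then have "\<exists>k. t < prob (Bs k)"
      by (rule unbounded_of_uniform_increments[where d = "prob C / 2"]) (use C(3) in simp)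
    with Bs show False
      by (meson not_le)
  qed
  ultimately show ?thesis
    using B by (intro bexI[of _ B]) auto
qed

lemma (in prob_space) atomless_partition:
  fixes k :: nat
  assumes al: "atomless M" and k: "0 < k" and A: "A \<in> events"
  shows "\<exists>B. (\<forall>i<k. B i \<in> events \<and> prob (B i) = prob A / k)
     \<and> disjoint_family_on B {..<k} \<and> (\<Union>i<k. B i) = A"
  using k A
proof (induction k arbitrary: A)
  case 0 then show ?case by simp
next
  case (Suc k)
  show ?case
  proof (cases "k = 0")
    case True
    then show ?thesis
      using Suc.prems by (intro exI[of _ "\<lambda>_. A"]) (auto simp: disjoint_family_on_def)
  next
    case False
    have "prob A / Suc k \<le> prob A / 1"
      by (intro divide_left_mono) auto
    then obtain B' where B': "B' \<in> events" "B' \<subseteq> A" "prob B' = prob A / Suc k"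
      using atomless_subset_of_measure[OF al Suc.prems(2), of "prob A / Suc k"] by auto
    have "prob (A - B') / k = prob A / Suc k"
      using finite_measure_Diff[OF Suc.prems(2) B'(1,2)] B'(3) False by (simp add: field_simps)
    moreover obtain B where B: "\<forall>i<k. B i \<in> events \<and> prob (B i) = prob (A - B') / k"
      "disjoint_family_on B {..<k}" "(\<Union>i<k. B i) = A - B'"
      using Suc.IH[of "A - B'"] False B' Suc.prems by auto
    ultimately have "\<forall>i<Suc k. (B(k := B')) i \<in> events \<and> prob ((B(k := B')) i) = prob A / Suc k"
      using B' by (auto simp: less_Suc_eq)
    moreover have "disjoint_family_on (B(k := B')) {..<Suc k}"
      unfolding disjoint_family_on_def
    proof (intro ballI impI)
      fix i j assume ij: "i \<in> {..<Suc k}" "j \<in> {..<Suc k}" "i \<noteq> j"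
      have "B i \<subseteq> A - B'" if "i < k" for i
        using B(3) that by blast
      then show "(B(k := B')) i \<inter> (B(k := B')) j = {}"
        using ij B(2) by (cases "i = k \<or> j = k") (auto simp: disjoint_family_on_def less_Suc_eq)
    qed
    moreover have "(\<Union>i<Suc k. (B(k := B')) i) = A"
      using B(3) B'(2) by (auto simp: lessThan_Suc)
    ultimately show ?thesis
      by blast
  qed
qed

section \<open>Empirical estimators of law-invariant exposure measures\<close>

lemma exposure_measure_mono:
  assumes "exposure_measure M \<rho>" "X \<in> borel_measurable M" "Y \<in> borel_measurable M"
    and "\<And>\<omega>. \<omega> \<in> space M \<Longrightarrow> X \<omega> \<le> Y \<omega>"
  shows "\<rho> X \<le> \<rho> Y"
  using assms unfolding exposure_measure_def by blast

lemma exposure_measure_add_const: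
  assumes "exposure_measure M \<rho>" "X \<in> borel_measurable M"
  shows "\<rho> (\<lambda>\<omega>. X \<omega> + c) = \<rho> X + ereal c"
  using assms unfolding exposure_measure_def by blast

definition equipartition :: "'b measure \<Rightarrow> nat \<Rightarrow> (nat \<Rightarrow> 'b set) \<Rightarrow> bool" where
  "equipartition M n B \<longleftrightarrow> (\<forall>i<n. B i \<in> sets M \<and> measure M (B i) = 1 / n)
     \<and> disjoint_family_on B {..<n} \<and> (\<Union>i<n. B i) = space M"

definition step_variable :: "nat \<Rightarrow> (nat \<Rightarrow> 'b set) \<Rightarrow> (nat \<Rightarrow> real) \<Rightarrow> 'b \<Rightarrow> real" where
  "step_variable n B x \<omega> = (\<Sum>i<n. x i * indicator (B i) \<omega>)"

lemma (in prob_space) atomless_equipartition_exists: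
  assumes "atomless M" "0 < n"
  shows "\<exists>B. equipartition M n B"
  using atomless_partition[OF assms, of "space M"] by (auto simp: equipartition_def prob_space)

lemma step_variable_eq:
  assumes "disjoint_family_on B {..<n}" "j < n" "\<omega> \<in> B j"
  shows "step_variable n B x \<omega> = x j"
proof -
  have "step_variable n B x \<omega> = (\<Sum>i\<in>{j}. x i * indicator (B i) \<omega>)"
    unfolding step_variable_def
    by (rule sum.mono_neutral_right) (use assms in \<open>auto simp: disjoint_family_on_def indicator_def\<close>)
  then show ?thesis
    using assms by simp
qed

lemma equipartition_step_variable_eq:
  assumes "equipartition M n B" "\<omega> \<in> space M"
  shows "\<exists>j<n. \<omega> \<in> B j \<and> (\<forall>x. step_variable n B x \<omega> = x j)"
proof -
  obtain j where j: "j < n" "\<omega> \<in> B j"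
    using assms by (auto simp: equipartition_def)
  moreover have "disjoint_family_on B {..<n}"
    using assms(1) by (simp add: equipartition_def)
  ultimately show ?thesis
    using step_variable_eq[of B n j \<omega>] by auto
qed

lemma step_variable_measurable:
  assumes "equipartition M n B"
  shows "step_variable n B x \<in> borel_measurable M"
  using assms unfolding step_variable_def equipartition_def
  by (intro borel_measurable_sum borel_measurable_times borel_measurable_const borel_measurable_indicator) auto

lemma (in prob_space) prob_step_variable_le:
  assumes B: "equipartition M n B"
  shows "prob {\<omega>\<in>space M. step_variable n B x \<omega> \<le> t} = emp_cdf n x t"
proof -
  have "{\<omega>\<in>space M. step_variable n B x \<omega> \<le> t} = (\<Union>i\<in>{i. i < n \<and> x i \<le> t}. B i)"
  proof (intro equalityI subsetI)
    fix \<omega> assume \<omega>: "\<omega> \<in> {\<omega>\<in>space M. step_variable n B x \<omega> \<le> t}"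
    then obtain j where "j < n" "\<omega> \<in> B j" "step_variable n B x \<omega> = x j"
      using equipartition_step_variable_eq[OF B] by auto
    then show "\<omega> \<in> (\<Union>i\<in>{i. i < n \<and> x i \<le> t}. B i)"
      using \<omega> by auto
  next
    fix \<omega> assume "\<omega> \<in> (\<Union>i\<in>{i. i < n \<and> x i \<le> t}. B i)"
    then obtain i where i: "i < n" "x i \<le> t" "\<omega> \<in> B i"
      by auto
    then have "\<omega> \<in> space M" "step_variable n B x \<omega> = x i"
      using B step_variable_eq by (auto simp: equipartition_def)
    then show "\<omega> \<in> {\<omega>\<in>space M. step_variable n B x \<omega> \<le> t}"
      using i by auto
  qed
  also have "prob \<dots> = (\<Sum>i\<in>{i. i < n \<and> x i \<le> t}. prob (B i))"
    by (rule finite_measure_finite_Union) (use B in \<open>auto simp: equipartition_def disjoint_family_on_def\<close>)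
  also have "\<dots> = card {i. i < n \<and> x i \<le> t} / n"
    using B by (simp add: equipartition_def)
  finally show ?thesis
    by (simp add: emp_cdf_def)
qed

text \<open>By law invariance the choice made by SOME in rho_hat is immaterial: any equipartition
  realises the empirical law.\<close>

lemma (in prob_space) rho_hat_eq_step_variable:
  assumes \<rho>: "law_invariant M \<rho>" and B: "equipartition M n B"
  shows "rho_hat M \<rho> n x = \<rho> (step_variable n B x)"
proof -
  let ?realises = "\<lambda>W. W \<in> borel_measurable M \<and> (\<forall>t. prob {\<omega>\<in>space M. W \<omega> \<le> t} = emp_cdf n x t)"
  have step: "?realises (step_variable n B x)"
    using step_variable_measurable[OF B] prob_step_variable_le[OF B] by simp
  define W where "W = (SOME W. ?realises W)"
  have W: "?realises W"
    unfolding W_def by (rule someI[where P = ?realises]) (fact step)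
  have cdf_distr: "cdf (distr M borel X) t = prob {\<omega>\<in>space M. X \<omega> \<le> t}"
    if "X \<in> borel_measurable M" for X t
    using that unfolding cdf_def by (subst measure_distr) (auto intro!: arg_cong[where f=prob])
  have "distr M borel W = distr M borel (step_variable n B x)"
    by (rule cdf_unique) (use W step cdf_distr in auto)
  then have "\<rho> W = \<rho> (step_variable n B x)"
    using \<rho> W step unfolding law_invariant_def by blast
  then show ?thesis
    by (simp add: rho_hat_def W_def)
qed

lemma (in prob_space) rho_hat_le_add:
  assumes "atomless M" "0 < n" and \<rho>: "exposure_measure M \<rho>" "law_invariant M \<rho>"
    and le: "\<forall>i<n. x i \<le> y i + r"
  shows "rho_hat M \<rho> n x \<le> rho_hat M \<rho> n y + ereal r"
proof -
  obtain B where B: "equipartition M n B"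
    using atomless_equipartition_exists[OF assms(1,2)] by blast
  note meas = step_variable_measurable[OF B]
  have "\<rho> (step_variable n B x) \<le> \<rho> (\<lambda>\<omega>. step_variable n B y \<omega> + r)"
  proof (rule exposure_measure_mono[OF \<rho>(1) meas])
    show "(\<lambda>\<omega>. step_variable n B y \<omega> + r) \<in> borel_measurable M"
      using meas by simp
    fix \<omega> assume "\<omega> \<in> space M"
    then obtain j where "j < n" "\<forall>z. step_variable n B z \<omega> = z j"
      using equipartition_step_variable_eq[OF B] by blast
    with le show "step_variable n B x \<omega> \<le> step_variable n B y \<omega> + r" by simp
  qed
  also have "\<dots> = \<rho> (step_variable n B y) + ereal r"
    by (rule exposure_measure_add_const[OF \<rho>(1) meas])
  finally show ?thesis
    by (simp only: rho_hat_eq_step_variable[OF \<rho>(2) B])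
qed

lemma (in prob_space) rho_hat_le_add_enn2ereal:
  assumes "atomless M" "0 < n" "exposure_measure M \<rho>" "law_invariant M \<rho>"
    and close: "\<forall>i<n. ennreal \<bar>x i - y i\<bar> \<le> R"
  shows "rho_hat M \<rho> n x \<le> rho_hat M \<rho> n y + enn2ereal R"
proof (cases "R = top")
  case True
  then show ?thesis by simp
next
  case False
  then obtain r where r: "R = ennreal r" "0 \<le> r"
    by (cases R) auto
  then have "\<forall>i<n. x i \<le> y i + r"
    using close by (auto simp: abs_le_iff)
  then show ?thesis
    using rho_hat_le_add[OF assms(1-4)] r by simp
qed

section \<open>A rearrangement inequality\<close>

lemma convex_on_powr_nonneg:
  assumes "1 \<le> p"
  shows "convex_on {0..} (\<lambda>x::real. x powr p)"
proof (rule convex_onI)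
  fix t x y :: real assume t: "0 < t" "t < 1" and xy: "x \<in> {0..}" "y \<in> {0..}"
  have shrink: "s powr p \<le> s" if "0 \<le> s" "s \<le> 1" for s :: real
    using powr_mono'[of 1 p s] that assms by simp
  show "((1 - t) *\<^sub>R x + t *\<^sub>R y) powr p \<le> (1 - t) * x powr p + t * y powr p"
  proof (cases "x = 0 \<or> y = 0")
    case True
    have "((1 - t) * x + t * y) powr p \<le> (1 - t) * x powr p + t * y powr p"
    proof (cases "x = 0")
      case True
      then have "((1 - t) * x + t * y) powr p = t powr p * y powr p"
        using t xy by (simp add: powr_mult)
      also have "\<dots> \<le> t * y powr p"
        using shrink[of t] t by (intro mult_right_mono) auto
      finally show ?thesis using True by simp
    next
      case False
      with \<open>x = 0 \<or> y = 0\<close> have "((1 - t) * x + t * y) powr p = (1 - t) powr p * x powr p"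
        using t xy by (simp add: powr_mult)
      also have "\<dots> \<le> (1 - t) * x powr p"
        using shrink[of "1 - t"] t by (intro mult_right_mono) auto
      finally show ?thesis using \<open>x = 0 \<or> y = 0\<close> False by simp
    qed
    then show ?thesis by simp
  next
    case False
    then have "x \<in> {0<..}" "y \<in> {0<..}"
      using xy by auto
    then show ?thesis
      using convex_onD[OF powr_convex[OF assms], of t x y] t by simp
  qed
qed auto

lemma convex_on_abs_powr:
  assumes "1 \<le> p"
  shows "convex_on UNIV (\<lambda>x::real. \<bar>x\<bar> powr p)"
proof (rule convex_onI)
  fix t x y :: real assume t: "0 < t" "t < 1"
  have "\<bar>(1 - t) *\<^sub>R x + t *\<^sub>R y\<bar> \<le> (1 - t) * \<bar>x\<bar> + t * \<bar>y\<bar>"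
    using t abs_triangle_ineq[of "(1 - t) * x" "t * y"] by (simp add: abs_mult)
  then have "\<bar>(1 - t) *\<^sub>R x + t *\<^sub>R y\<bar> powr p \<le> ((1 - t) *\<^sub>R \<bar>x\<bar> + t *\<^sub>R \<bar>y\<bar>) powr p"
    using assms by (intro powr_mono2) auto
  also have "\<dots> \<le> (1 - t) * \<bar>x\<bar> powr p + t * \<bar>y\<bar> powr p"
    using t by (intro convex_onD[OF convex_on_powr_nonneg[OF assms]]) auto
  finally show "\<bar>(1 - t) *\<^sub>R x + t *\<^sub>R y\<bar> powr p \<le> (1 - t) * \<bar>x\<bar> powr p + t * \<bar>y\<bar> powr p" .
qed simp

lemma convex_on_add_le_outer:
  fixes \<phi> :: "real \<Rightarrow> real"
  assumes "convex_on UNIV \<phi>" "u \<le> m1" "m1 \<le> v" "m1 + m2 = u + v"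
  shows "\<phi> m1 + \<phi> m2 \<le> \<phi> u + \<phi> v"
proof (cases "u = v")
  case True
  then show ?thesis using assms by simp
next
  case False
  define t where "t = (m1 - u) / (v - u)"
  have t: "0 \<le> t" "t \<le> 1"
    using assms False by (auto simp: t_def field_simps)
  have "t * (v - u) = m1 - u"
    using False by (simp add: t_def)
  then have m1: "m1 = (1 - t) *\<^sub>R u + t *\<^sub>R v" and m2: "m2 = (1 - (1 - t)) *\<^sub>R u + (1 - t) *\<^sub>R v"
    using assms(4) by (simp_all add: algebra_simps)
  have "\<phi> m1 \<le> (1 - t) * \<phi> u + t * \<phi> v"
    unfolding m1 by (rule convex_onD[OF assms(1) t]) auto
  moreover have "\<phi> m2 \<le> (1 - (1 - t)) * \<phi> u + (1 - t) * \<phi> v"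
    unfolding m2 by (rule convex_onD[OF assms(1)]) (use t in auto)
  ultimately show ?thesis
    by (simp add: algebra_simps)
qed

lemma sorted_list_of_multiset_add_mset_max:
  fixes m :: "'a::linorder"
  assumes "\<forall>x\<in>#A. x \<le> m"
  shows "sorted_list_of_multiset (add_mset m A) = sorted_list_of_multiset A @ [m]"
proof -
  obtain xs where xs: "mset xs = A"
    using ex_mset by blast
  then have "sorted_list_of_multiset (add_mset m A) = sort (xs @ [m])"
    by (metis mset_append mset_single_iff_right sorted_list_of_multiset_mset union_commute add_mset_add_single)
  also have "\<dots> = sort xs @ sort [m]"
    using assms xs by (intro sort_append) auto
  finally show ?thesis
    by (simp flip: xs)
qed

text \<open>A multiset of pairs is read as a coupling of its two marginals; sorted_coupling_cost is
  the cost of the comonotone coupling, which pairs the sorted marginals.\<close>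

definition coupling_cost :: "(real \<Rightarrow> real) \<Rightarrow> (real \<times> real) multiset \<Rightarrow> real" where
  "coupling_cost \<phi> M = (\<Sum>(a, b)\<in>#M. \<phi> (a - b))"

definition sorted_coupling_cost :: "(real \<Rightarrow> real) \<Rightarrow> (real \<times> real) multiset \<Rightarrow> real" where
  "sorted_coupling_cost \<phi> M = sum_list (map (\<lambda>(a, b). \<phi> (a - b))
      (zip (sorted_list_of_multiset (image_mset fst M)) (sorted_list_of_multiset (image_mset snd M))))"

lemma sorted_coupling_cost_add_mset_max:
  assumes "\<forall>z\<in>#M. fst z \<le> a" "\<forall>z\<in>#M. snd z \<le> b"
  shows "sorted_coupling_cost \<phi> (add_mset (a, b) M) = sorted_coupling_cost \<phi> M + \<phi> (a - b)"
proof -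
  have "sorted_list_of_multiset (image_mset fst (add_mset (a, b) M))
      = sorted_list_of_multiset (image_mset fst M) @ [a]"
    unfolding image_mset_add_mset fst_conv
    by (rule sorted_list_of_multiset_add_mset_max) (use assms in auto)
  moreover have "sorted_list_of_multiset (image_mset snd (add_mset (a, b) M))
      = sorted_list_of_multiset (image_mset snd M) @ [b]"
    unfolding image_mset_add_mset snd_conv
    by (rule sorted_list_of_multiset_add_mset_max) (use assms in auto)
  moreover have "length (sorted_list_of_multiset (image_mset fst M))
      = length (sorted_list_of_multiset (image_mset snd M))"
    by (metis mset_sorted_list_of_multiset size_mset size_image_mset)
  ultimately show ?thesis
    unfolding sorted_coupling_cost_def by simp
qed

lemma coupling_cost_swap_le:
  assumes "convex_on UNIV \<phi>" "\<alpha> \<le> a" "\<beta> \<le> b"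
  shows "coupling_cost \<phi> (add_mset (a, b) (add_mset (\<alpha>, \<beta>) N))
    \<le> coupling_cost \<phi> (add_mset (a, \<beta>) (add_mset (\<alpha>, b) N))"
proof -
  have "\<phi> (a - b) + \<phi> (\<alpha> - \<beta>) \<le> \<phi> (\<alpha> - b) + \<phi> (a - \<beta>)"
    using assms by (intro convex_on_add_le_outer) auto
  then show ?thesis
    by (simp add: coupling_cost_def)
qed

text \<open>The witness swaps the partners of the two marginal maxima.\<close>

lemma exists_coupling_with_max_pair:
  assumes cv: "convex_on UNIV \<phi>" and "M \<noteq> {#}"
  defines "a \<equiv> Max (fst ` set_mset M)" and "b \<equiv> Max (snd ` set_mset M)"
  shows "\<exists>N. image_mset fst (add_mset (a, b) N) = image_mset fst M
    \<and> image_mset snd (add_mset (a, b) N) = image_mset snd M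
    \<and> coupling_cost \<phi> (add_mset (a, b) N) \<le> coupling_cost \<phi> M"
proof -
  have "a \<in> fst ` set_mset M" "b \<in> snd ` set_mset M"
    unfolding a_def b_def using assms(2) by (intro Max_in; simp)+
  then obtain \<alpha> \<beta> where \<beta>: "(a, \<beta>) \<in># M" and \<alpha>: "(\<alpha>, b) \<in># M"
    by force
  have "\<alpha> \<le> a"
    unfolding a_def by (rule Max_ge) (use \<alpha> in force)+
  have "\<beta> \<le> b"
    unfolding b_def by (rule Max_ge) (use \<beta> in force)+
  show ?thesis
  proof (cases "(a, b) \<in># M")
    case True
    then show ?thesis
      by (intro exI[of _ "M - {#(a, b)#}"]) simp
  next
    case False
    then have "(\<alpha>, b) \<in># M - {#(a, \<beta>)#}"
      using \<alpha> \<beta> by (auto simp: in_diff_count)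
    then obtain N where M: "M = add_mset (a, \<beta>) (add_mset (\<alpha>, b) N)"
      using \<beta> by (metis insert_DiffM)
    show ?thesis
      using coupling_cost_swap_le[OF cv \<open>\<alpha> \<le> a\<close> \<open>\<beta> \<le> b\<close>, of N]
      by (intro exI[of _ "add_mset (\<alpha>, \<beta>) N"]) (simp add: M add_mset_commute)
  qed
qed

lemma sorted_coupling_cost_le:
  assumes cv: "convex_on UNIV \<phi>"
  shows "sorted_coupling_cost \<phi> M \<le> coupling_cost \<phi> M"
proof (induction "size M" arbitrary: M rule: less_induct)
  case less
  show ?case
  proof (cases "M = {#}")
    case True
    then show ?thesis by (simp add: sorted_coupling_cost_def coupling_cost_def)
  next
    case False
    define a where "a = Max (fst ` set_mset M)"
    define b where "b = Max (snd ` set_mset M)"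
    obtain N where fst_N: "image_mset fst (add_mset (a, b) N) = image_mset fst M"
      and snd_N: "image_mset snd (add_mset (a, b) N) = image_mset snd M"
      and cost: "coupling_cost \<phi> (add_mset (a, b) N) \<le> coupling_cost \<phi> M"
      using exists_coupling_with_max_pair[OF cv False] unfolding a_def b_def by blast
    have "size M = Suc (size N)"
      using arg_cong[OF fst_N, of size] by simp
    have "fst z \<in># image_mset fst M" "snd z \<in># image_mset snd M" if "z \<in># N" for z
      unfolding fst_N[symmetric] snd_N[symmetric] using that by auto
    then have max: "\<forall>z\<in>#N. fst z \<le> a" "\<forall>z\<in>#N. snd z \<le> b"
      by (auto simp: a_def b_def)
    have "sorted_coupling_cost \<phi> M = sorted_coupling_cost \<phi> (add_mset (a, b) N)"
      by (simp only: sorted_coupling_cost_def fst_N snd_N)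
    also have "\<dots> = sorted_coupling_cost \<phi> N + \<phi> (a - b)"
      by (rule sorted_coupling_cost_add_mset_max[OF max])
    also have "\<dots> \<le> coupling_cost \<phi> N + \<phi> (a - b)"
      using less \<open>size M = Suc (size N)\<close> by simp
    also have "\<dots> = coupling_cost \<phi> (add_mset (a, b) N)"
      by (simp add: coupling_cost_def)
    finally show ?thesis
      using cost by simp
  qed
qed

lemma sum_order_stat_diff_powr_le:
  fixes x y :: "nat \<Rightarrow> real"
  assumes "1 \<le> p"
  shows "(\<Sum>i=1..n. \<bar>order_stat n x i - order_stat n y i\<bar> powr p) \<le> (\<Sum>j<n. \<bar>x j - y j\<bar> powr p)"
proof -
  define \<phi> where "\<phi> d = \<bar>d\<bar> powr p" for d :: real
  define M where "M = mset (map (\<lambda>j. (x j, y j)) [0..<n])"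
  have marginals: "image_mset fst M = mset (map x [0..<n])" "image_mset snd M = mset (map y [0..<n])"
    by (simp_all only: M_def mset_map multiset.map_comp o_def fst_conv snd_conv)
  have "sorted_coupling_cost \<phi> M
      = sum_list (map (\<lambda>(a, b). \<phi> (a - b)) (zip (sort (map x [0..<n])) (sort (map y [0..<n]))))"
    unfolding sorted_coupling_cost_def marginals sorted_list_of_multiset_mset by (rule refl)
  also have "\<dots> = (\<Sum>k<n. \<phi> (sort (map x [0..<n]) ! k - sort (map y [0..<n]) ! k))"
    by (simp add: sum_list_sum_nth lessThan_atLeast0)
  also have "\<dots> = (\<Sum>i=1..n. \<phi> (order_stat n x i - order_stat n y i))"
    unfolding order_stat_def by (rule sum.reindex_bij_witness[of _ "\<lambda>i. i - 1" "Suc"]) auto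
  finally have "sorted_coupling_cost \<phi> M = (\<Sum>i=1..n. \<phi> (order_stat n x i - order_stat n y i))" .
  moreover have "coupling_cost \<phi> M = (\<Sum>j<n. \<phi> (x j - y j))"
  proof -
    have "coupling_cost \<phi> M = sum_list (map (\<lambda>(a, b). \<phi> (a - b)) (map (\<lambda>j. (x j, y j)) [0..<n]))"
      unfolding coupling_cost_def M_def mset_map[symmetric] sum_mset_sum_list ..
    then show ?thesis
      by (simp add: sum_list_sum_nth lessThan_atLeast0 o_def)
  qed
  moreover have "sorted_coupling_cost \<phi> M \<le> coupling_cost \<phi> M"
    using sorted_coupling_cost_le convex_on_abs_powr[OF assms] by (simp add: \<phi>_def[abs_def])
  ultimately show ?thesis
    by (simp add: \<phi>_def)
qed

section \<open>Hoelder's inequality\<close>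

lemma enn_powr_ennreal: "0 \<le> x \<Longrightarrow> enn_powr (ennreal x) a = ennreal (x powr a)"
  by (simp add: enn_powr_def)

lemma enn_powr_top [simp]: "enn_powr top a = top"
  by (simp add: enn_powr_def)

lemma enn_powr_one [simp]: "enn_powr x 1 = x"
  by (cases x) (auto simp: enn_powr_def)

lemma enn_powr_pos: "0 < x \<Longrightarrow> 0 < enn_powr x a"
  by (cases x) (auto simp: enn_powr_def)

lemma enn_powr_mult: "enn_powr (x * y) a = enn_powr x a * enn_powr y a"
proof (cases "x = top \<or> y = top")
  case True
  then show ?thesis
    by (cases x; cases y) (auto simp: enn_powr_def ennreal_mult_eq_top_iff ennreal_top_mult)
next
  case False
  then show ?thesis
    by (cases x; cases y) (auto simp: enn_powr_def powr_mult simp flip: ennreal_mult)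
qed

lemma nn_integral_mult_eq_0_if_powr:
  fixes f g :: "'a \<Rightarrow> real"
  assumes "f \<in> borel_measurable N" "g \<in> borel_measurable N" "\<And>x. 0 \<le> f x"
    and "(\<integral>\<^sup>+x. ennreal (f x powr p) \<partial>N) = 0"
  shows "(\<integral>\<^sup>+x. ennreal (f x * g x) \<partial>N) = 0"
proof -
  have "AE x in N. ennreal (f x powr p) = 0"
    using assms by (subst (asm) nn_integral_0_iff_AE) auto
  then have "AE x in N. ennreal (f x * g x) = 0"
    by eventually_elim (use assms(3) in \<open>auto simp: ennreal_eq_0_iff\<close>)
  then show ?thesis
    using assms by (subst nn_integral_0_iff_AE) auto
qed

text \<open>Young's inequality applied to f / a^(1/p) and g / b^(1/q), then integrated.\<close>

lemma nn_integral_mult_le_Young: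
  fixes f g :: "'a \<Rightarrow> real"
  assumes "f \<in> borel_measurable N" "g \<in> borel_measurable N" and f0: "\<And>x. 0 \<le> f x" and g0: "\<And>x. 0 \<le> g x"
    and p: "1 < p" and q: "1 < q" and pq: "1/p + 1/q = 1"
    and a: "(\<integral>\<^sup>+x. ennreal (f x powr p) \<partial>N) = ennreal a" "0 < a"
    and b: "(\<integral>\<^sup>+x. ennreal (g x powr q) \<partial>N) = ennreal b" "0 < b"
  shows "(\<integral>\<^sup>+x. ennreal (f x * g x) \<partial>N) \<le> ennreal (a powr (1/p) * b powr (1/q))"
proof -
  define \<alpha> where "\<alpha> = a powr (1/p)"
  define \<beta> where "\<beta> = b powr (1/q)"
  have \<alpha>\<beta>: "0 < \<alpha>" "0 < \<beta>" "\<alpha> powr p = a" "\<beta> powr q = b"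
    using a b p q by (auto simp: \<alpha>_def \<beta>_def powr_powr)
  define c1 where "c1 = \<alpha> * \<beta> / (p * a)"
  define c2 where "c2 = \<alpha> * \<beta> / (q * b)"
  have c: "0 \<le> c1" "0 \<le> c2"
    using \<alpha>\<beta> a b p q by (auto simp: c1_def c2_def)
  have pointwise: "f x * g x \<le> c1 * f x powr p + c2 * g x powr q" for x
  proof -
    have "f x * g x = (\<alpha> * \<beta>) * ((f x / \<alpha>) * (g x / \<beta>))"
      using \<alpha>\<beta> by (simp add: field_simps)
    also have "\<dots> \<le> (\<alpha> * \<beta>) * ((f x / \<alpha>) powr p / p + (g x / \<beta>) powr q / q)"
      using Youngs_inequality[OF p q pq, of "f x / \<alpha>" "g x / \<beta>"] f0 g0 \<alpha>\<beta> by (intro mult_left_mono) auto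
    also have "\<dots> = c1 * f x powr p + c2 * g x powr q"
      using f0 g0 \<alpha>\<beta> a b p q by (simp add: powr_divide c1_def c2_def field_simps)
    finally show ?thesis .
  qed
  have "(\<integral>\<^sup>+x. ennreal (f x * g x) \<partial>N)
      \<le> (\<integral>\<^sup>+x. ennreal c1 * ennreal (f x powr p) + ennreal c2 * ennreal (g x powr q) \<partial>N)"
    using pointwise c by (intro nn_integral_mono) (auto simp flip: ennreal_mult ennreal_plus intro!: ennreal_leI)
  also have "\<dots> = ennreal (c1 * a + c2 * b)"
    using assms c by (simp add: nn_integral_add nn_integral_cmult ennreal_mult ennreal_plus)
  also have "c1 * a + c2 * b = \<alpha> * \<beta>"
    using a b p q pq by (simp add: c1_def c2_def field_simps)
  finally show ?thesis
    by (simp add: \<alpha>_def \<beta>_def)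
qed

theorem nn_integral_Holder:
  fixes f g :: "'a \<Rightarrow> real"
  assumes fg: "f \<in> borel_measurable N" "g \<in> borel_measurable N" "\<And>x. 0 \<le> f x" "\<And>x. 0 \<le> g x"
    and pq: "1 < p" "1 < q" "1/p + 1/q = 1"
  shows "(\<integral>\<^sup>+x. ennreal (f x * g x) \<partial>N)
    \<le> enn_powr (\<integral>\<^sup>+x. ennreal (f x powr p) \<partial>N) (1/p) * enn_powr (\<integral>\<^sup>+x. ennreal (g x powr q) \<partial>N) (1/q)"
    (is "?I \<le> enn_powr ?A (1/p) * enn_powr ?B (1/q)")
proof (cases "?A = 0 \<or> ?B = 0")
  case True
  then have "?I = 0"
    using nn_integral_mult_eq_0_if_powr[of f N g] nn_integral_mult_eq_0_if_powr[of g N f] fg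
    by (auto simp: mult.commute)
  then show ?thesis by simp
next
  case nonzero: False
  show ?thesis
  proof (cases "?A = top \<or> ?B = top")
    case True
    have "0 < enn_powr ?A (1/p)" "0 < enn_powr ?B (1/q)"
      by (rule enn_powr_pos; use nonzero in \<open>simp add: zero_less_iff_neq_zero\<close>)+
    then show ?thesis
      using True by (auto simp: ennreal_top_mult ennreal_mult_top)
  next
    case False
    obtain a where "?A = ennreal a" "0 \<le> a"
      using False by (cases ?A) auto
    moreover obtain b where "?B = ennreal b" "0 \<le> b"
      using False by (cases ?B) auto
    moreover from calculation have "0 < a" "0 < b"
      using nonzero by auto
    ultimately show ?thesis
      using nn_integral_mult_le_Young[OF fg pq] by (simp add: enn_powr_ennreal ennreal_mult)
  qed
qed

lemma AE_le_Linf_norm_01: "AE u in lborel. u \<in> {0<..<1} \<longrightarrow> ennreal \<bar>f u\<bar> \<le> Linf_norm_01 f"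
proof -
  define S where "S = {c. AE u in lborel. u \<in> {0<..<1} \<longrightarrow> ennreal \<bar>f u\<bar> \<le> c}"
  have "top \<in> S"
    by (simp add: S_def)
  then obtain c :: "nat \<Rightarrow> ennreal" where c: "range c \<subseteq> S" "Inf S = (INF i. c i)"
    using ennreal_Inf_countable_INF[of S] by blast
  have "AE u in lborel. \<forall>i. u \<in> {0<..<1} \<longrightarrow> ennreal \<bar>f u\<bar> \<le> c i"
    using c(1) by (subst AE_all_countable) (auto simp: S_def)
  then show ?thesis
    unfolding Linf_norm_01_def S_def[symmetric] c(2) by eventually_elim (auto intro: INF_greatest)
qed

lemma nn_integral_unit_interval_Linf:
  fixes fm g :: "real \<Rightarrow> real"
  assumes g: "g \<in> borel_measurable borel" "\<And>u. 0 \<le> g u"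
  shows "(\<integral>\<^sup>+u. ennreal (\<bar>fm u\<bar> * indicator {0<..<1} u * g u) \<partial>lborel)
    \<le> Linf_norm_01 fm * (\<integral>\<^sup>+u. ennreal (g u) \<partial>lborel)"
proof -
  have "(\<integral>\<^sup>+u. ennreal (\<bar>fm u\<bar> * indicator {0<..<1} u * g u) \<partial>lborel)
      \<le> (\<integral>\<^sup>+u. Linf_norm_01 fm * ennreal (g u) \<partial>lborel)"
    using AE_le_Linf_norm_01[of fm]
  proof (rule nn_integral_mono_AE[OF eventually_mono])
    fix u assume "u \<in> {0<..<1} \<longrightarrow> ennreal \<bar>fm u\<bar> \<le> Linf_norm_01 fm"
    then show "ennreal (\<bar>fm u\<bar> * indicator {0<..<1} u * g u) \<le> Linf_norm_01 fm * ennreal (g u)"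
      using g(2)[of u] by (cases "u \<in> {0<..<1}") (auto simp: ennreal_mult intro: mult_right_mono)
  qed
  also have "\<dots> = Linf_norm_01 fm * (\<integral>\<^sup>+u. ennreal (g u) \<partial>lborel)"
    using g by (simp add: nn_integral_cmult)
  finally show ?thesis .
qed

lemma nn_integral_unit_interval_Holder:
  fixes fm g :: "real \<Rightarrow> real"
  assumes fm: "fm \<in> borel_measurable borel" and g: "g \<in> borel_measurable borel" "\<And>u. 0 \<le> g u"
    and p: "1 \<le> p" and q: "1 \<le> q" and pq: "1 / ereal p + 1 / q = 1"
  shows "(\<integral>\<^sup>+u. ennreal (\<bar>fm u\<bar> * indicator {0<..<1} u * g u) \<partial>lborel)
    \<le> Lq_norm_01 q fm * enn_powr (\<integral>\<^sup>+u. ennreal (g u powr p) \<partial>lborel) (1/p)"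
proof (cases "q = \<infinity>")
  case True
  then have "p = 1"
    using pq p by (auto simp: one_ereal_def field_simps split: if_splits)
  then show ?thesis
    using nn_integral_unit_interval_Linf[OF g] True g(2) by (simp add: Lq_norm_01_def)
next
  case False
  then obtain r where qr: "q = ereal r"
    using q by (cases q) auto
  have "1 \<le> r" "1/p + 1/r = 1"
    using pq qr p q by (auto simp: one_ereal_def)
  then have pr: "1/p + 1/r = 1" "1 < p" "1 < r"
    using p by (cases "p = 1"; cases "r = 1"; auto)+
  define F where "F u = \<bar>fm u\<bar> * indicator {0<..<1} u" for u
  have "Lq_norm_01 q fm = enn_powr (\<integral>\<^sup>+u. ennreal (\<bar>fm u\<bar> powr r) \<partial>restrict_space lborel {0<..<1}) (1/r)"
    using False qr by (simp add: Lq_norm_01_def Lp_norm_def)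
  also have "(\<integral>\<^sup>+u. ennreal (\<bar>fm u\<bar> powr r) \<partial>restrict_space lborel {0<..<1})
      = (\<integral>\<^sup>+u. ennreal (F u powr r) \<partial>lborel)"
    by (subst nn_integral_restrict_space) (auto intro!: nn_integral_cong simp: F_def indicator_def)
  finally have "Lq_norm_01 q fm = enn_powr (\<integral>\<^sup>+u. ennreal (F u powr r) \<partial>lborel) (1/r)" .
  moreover have "(\<integral>\<^sup>+u. ennreal (F u * g u) \<partial>lborel)
      \<le> enn_powr (\<integral>\<^sup>+u. ennreal (F u powr r) \<partial>lborel) (1/r) * enn_powr (\<integral>\<^sup>+u. ennreal (g u powr p) \<partial>lborel) (1/p)"
    using fm g pr by (intro nn_integral_Holder) (auto simp: F_def add.commute)
  ultimately show ?thesis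
    by (simp add: F_def)
qed

section \<open>Quantile-based estimators\<close>

text \<open>The weight w_i of rho_m_hat is the f_m-mass of the i-th cell ((i-1)/n, i/n) of (0,1).\<close>

definition cell :: "nat \<Rightarrow> nat \<Rightarrow> real set" where
  "cell n i = {(real i - 1) / n <..< real i / n}"

definition cell_step :: "nat \<Rightarrow> (nat \<Rightarrow> real) \<Rightarrow> real \<Rightarrow> real" where
  "cell_step n a u = (\<Sum>i=1..n. a i * indicator (cell n i) u)"

lemma cell_subset_unit_interval: "i \<in> {1..n} \<Longrightarrow> cell n i \<subseteq> {0<..<1}"
proof
  fix u assume i: "i \<in> {1..n}" and "u \<in> cell n i"
  then have "(real i - 1) / n < u" "u < real i / n"
    by (auto simp: cell_def)
  moreover have "0 \<le> (real i - 1) / n" "real i / n \<le> 1"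
    using i by (auto simp: divide_le_eq)
  ultimately show "u \<in> {0<..<1}"
    by auto
qed

lemma cell_disjoint: "i \<noteq> j \<Longrightarrow> cell n i \<inter> cell n j = {}"
proof -
  assume "i \<noteq> j"
  then have "real i \<le> real j - 1 \<or> real j \<le> real i - 1"
    by auto
  then have "real i / n \<le> (real j - 1) / n \<or> real j / n \<le> (real i - 1) / n"
    by (auto intro: divide_right_mono)
  then show ?thesis
    by (auto simp: cell_def)
qed

lemma emeasure_cell: "0 < n \<Longrightarrow> emeasure lborel (cell n i) = ennreal (1 / n)"
  by (simp add: cell_def divide_right_mono diff_divide_distrib[symmetric])

lemma cell_step_eq: "j \<in> {1..n} \<Longrightarrow> u \<in> cell n j \<Longrightarrow> cell_step n a u = a j"
  unfolding cell_step_def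
  by (subst sum.remove[of _ j]) (auto intro!: sum.neutral dest: cell_disjoint[of _ j n])

lemma cell_step_eq_0: "(\<And>j. j \<in> {1..n} \<Longrightarrow> u \<notin> cell n j) \<Longrightarrow> cell_step n a u = 0"
  by (simp add: cell_step_def)

lemma cell_step_powr: "cell_step n a u powr r = cell_step n (\<lambda>i. a i powr r) u"
proof (cases "\<exists>j\<in>{1..n}. u \<in> cell n j")
  case True
  then show ?thesis
    by (auto simp: cell_step_eq)
next
  case False
  then have "cell_step n b u = 0" for b
    by (intro cell_step_eq_0) auto
  then show ?thesis
    by simp
qed

lemma cell_step_nonneg: "(\<And>i. 0 \<le> a i) \<Longrightarrow> 0 \<le> cell_step n a u"
  by (simp add: cell_step_def sum_nonneg)

lemma cell_step_measurable [measurable]: "cell_step n a \<in> borel_measurable borel"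
  unfolding cell_step_def cell_def by measurable

lemma nn_integral_cell_step:
  assumes "0 < n" "\<And>i. 0 \<le> a i"
  shows "(\<integral>\<^sup>+u. ennreal (cell_step n a u) \<partial>lborel) = ennreal ((\<Sum>i=1..n. a i) / n)"
proof -
  have "(\<integral>\<^sup>+u. ennreal (cell_step n a u) \<partial>lborel)
      = (\<integral>\<^sup>+u. (\<Sum>i=1..n. ennreal (a i) * indicator (cell n i) u) \<partial>lborel)"
    using assms(2) by (intro nn_integral_cong) (simp add: cell_step_def ennreal_mult ennreal_indicator sum_nonneg)
  also have "\<dots> = (\<Sum>i=1..n. ennreal (a i) * emeasure lborel (cell n i))"
    by (subst nn_integral_sum) (auto simp: cell_def nn_integral_cmult)
  also have "\<dots> = ennreal ((\<Sum>i=1..n. a i) / n)"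
    using assms by (simp add: emeasure_cell sum_divide_distrib ennreal_mult[symmetric] sum_nonneg)
  finally show ?thesis .
qed

lemma abs_interval_integral_le_nn_integral:
  fixes f :: "real \<Rightarrow> real" and a b :: real
  assumes "a \<le> b"
  shows "ennreal \<bar>LBINT u=a..b. f u\<bar> \<le> (\<integral>\<^sup>+u. ennreal (\<bar>f u\<bar> * indicator {a<..<b} u) \<partial>lborel)"
proof -
  have eq: "(LBINT u=a..b. f u) = integral\<^sup>L lborel (\<lambda>u. indicator {a<..<b} u *\<^sub>R f u)"
    using assms by (simp add: interval_lebesgue_integral_def set_lebesgue_integral_def)
  have norm: "norm (indicator {a<..<b} u *\<^sub>R f u) = \<bar>f u\<bar> * indicator {a<..<b} u" for u
    by (simp add: indicator_def)
  show ?thesis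
  proof (cases "integrable lborel (\<lambda>u. indicator {a<..<b} u *\<^sub>R f u)")
    case True
    from integral_norm_bound_ennreal[OF True] show ?thesis
      unfolding eq norm by simp
  next
    case False
    then show ?thesis
      unfolding eq by (simp add: not_integrable_integral_eq)
  qed
qed

lemma sum_cell_indicator_eq:
  "(\<Sum>i=1..n. a i * (c * indicator (cell n i) u)) = c * indicator {0<..<1} u * cell_step n a u"
proof (cases "u \<in> {0<..<1}")
  case True
  then have "indicator {0<..<1} u = (1::real)"
    by simp
  then show ?thesis
    unfolding cell_step_def sum_distrib_left by (intro sum.cong refl) (simp add: mult_ac)
next
  case False
  then have "indicator (cell n i) u = (0::real)" if "i \<in> {1..n}" for i
    using cell_subset_unit_interval[OF that] by (auto simp: indicator_def)
  then show ?thesis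
    using False by simp
qed

lemma rho_m_hat_diff_le_nn_integral:
  assumes "0 < n" "fm \<in> borel_measurable borel"
  shows "ennreal \<bar>rho_m_hat fm n x - rho_m_hat fm n y\<bar> \<le> (\<integral>\<^sup>+u. ennreal (\<bar>fm u\<bar> * indicator {0<..<1} u
      * cell_step n (\<lambda>i. \<bar>order_stat n x i - order_stat n y i\<bar>) u) \<partial>lborel)"
proof -
  define a where "a i = \<bar>order_stat n x i - order_stat n y i\<bar>" for i
  define w where "w i = (LBINT u=(real i - 1) / real n..real i / real n. fm u)" for i
  have "\<bar>rho_m_hat fm n x - rho_m_hat fm n y\<bar> = \<bar>\<Sum>i=1..n. w i * (order_stat n x i - order_stat n y i)\<bar>"
    unfolding rho_m_hat_def w_def by (simp add: right_diff_distrib sum_subtractf)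
  also have "\<dots> \<le> (\<Sum>i=1..n. \<bar>w i * (order_stat n x i - order_stat n y i)\<bar>)"
    by (rule sum_abs)
  also have "\<dots> = (\<Sum>i=1..n. a i * \<bar>w i\<bar>)"
    by (simp add: a_def abs_mult mult.commute)
  finally have "ennreal \<bar>rho_m_hat fm n x - rho_m_hat fm n y\<bar> \<le> (\<Sum>i=1..n. ennreal (a i) * ennreal \<bar>w i\<bar>)"
    by (simp add: a_def sum_ennreal ennreal_leI flip: ennreal_mult)
  also have "\<dots> \<le> (\<Sum>i=1..n. ennreal (a i) * (\<integral>\<^sup>+u. ennreal (\<bar>fm u\<bar> * indicator (cell n i) u) \<partial>lborel))"
    unfolding w_def cell_def
    by (intro sum_mono mult_left_mono abs_interval_integral_le_nn_integral) (auto simp: divide_right_mono)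
  also have "\<dots> = (\<integral>\<^sup>+u. (\<Sum>i=1..n. ennreal (a i) * ennreal (\<bar>fm u\<bar> * indicator (cell n i) u)) \<partial>lborel)"
    using assms(2) by (subst nn_integral_sum) (auto simp: cell_def nn_integral_cmult)
  also have "\<dots> = (\<integral>\<^sup>+u. ennreal (\<bar>fm u\<bar> * indicator {0<..<1} u * cell_step n a u) \<partial>lborel)"
  proof (intro nn_integral_cong)
    fix u
    show "(\<Sum>i=1..n. ennreal (a i) * ennreal (\<bar>fm u\<bar> * indicator (cell n i) u))
        = ennreal (\<bar>fm u\<bar> * indicator {0<..<1} u * cell_step n a u)"
      using sum_cell_indicator_eq[where a = a and c = "\<bar>fm u\<bar>" and n = n and u = u] by (simp add: a_def sum_ennreal flip: ennreal_mult)
  qed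
  finally show ?thesis
    by (simp only: a_def[abs_def])
qed

lemma rho_m_hat_diff_le:
  assumes "0 < n" "fm \<in> borel_measurable borel" and p: "1 \<le> p" and "1 \<le> q" "1 / ereal p + 1 / q = 1"
  shows "ennreal \<bar>rho_m_hat fm n x - rho_m_hat fm n y\<bar>
    \<le> Lq_norm_01 q fm * ennreal (((\<Sum>j<n. \<bar>x j - y j\<bar> powr p) / n) powr (1/p))"
proof -
  define a where "a i = \<bar>order_stat n x i - order_stat n y i\<bar>" for i
  have "ennreal \<bar>rho_m_hat fm n x - rho_m_hat fm n y\<bar>
      \<le> (\<integral>\<^sup>+u. ennreal (\<bar>fm u\<bar> * indicator {0<..<1} u * cell_step n a u) \<partial>lborel)"
    unfolding a_def by (rule rho_m_hat_diff_le_nn_integral[OF assms(1,2)])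
  also have "\<dots> \<le> Lq_norm_01 q fm * enn_powr (\<integral>\<^sup>+u. ennreal (cell_step n a u powr p) \<partial>lborel) (1/p)"
    using assms by (intro nn_integral_unit_interval_Holder) (auto simp: a_def cell_step_nonneg)
  also have "\<dots> = Lq_norm_01 q fm * ennreal (((\<Sum>i=1..n. a i powr p) / n) powr (1/p))"
    using assms(1) by (simp add: cell_step_powr nn_integral_cell_step enn_powr_ennreal sum_nonneg)
  also have "\<dots> \<le> Lq_norm_01 q fm * ennreal (((\<Sum>j<n. \<bar>x j - y j\<bar> powr p) / n) powr (1/p))"
    using sum_order_stat_diff_powr_le[OF p, of n x y] p
    by (intro mult_left_mono ennreal_leI powr_mono2 divide_right_mono) (auto simp: a_def sum_nonneg)
  finally show ?thesis .
qed

section \<open>Concentration\<close>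

lemma (in prob_space) prob_greater_le_Markov:
  fixes W :: "'a \<Rightarrow> real"
  assumes W: "W \<in> borel_measurable M" and int: "(\<integral>\<^sup>+\<omega>. ennreal (W \<omega>) \<partial>M) \<le> ennreal e"
    and e: "0 \<le> e" and t: "0 < t"
  shows "prob {\<omega>\<in>space M. t < W \<omega>} \<le> e / t"
proof -
  have "{\<omega>\<in>space M. t < W \<omega>} \<subseteq> {\<omega>\<in>space M. 1 \<le> ennreal (1/t) * ennreal (W \<omega>)}"
  proof
    fix \<omega> assume "\<omega> \<in> {\<omega>\<in>space M. t < W \<omega>}"
    then have "\<omega> \<in> space M" "1 \<le> 1/t * W \<omega>"
      using t by (auto simp: field_simps)
    then show "\<omega> \<in> {\<omega>\<in>space M. 1 \<le> ennreal (1/t) * ennreal (W \<omega>)}"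
      using t by (simp add: ennreal_mult[symmetric] ennreal_leI[of 1, simplified])
  qed
  then have "emeasure M {\<omega>\<in>space M. t < W \<omega>} \<le> emeasure M {\<omega>\<in>space M. 1 \<le> ennreal (1/t) * ennreal (W \<omega>)}"
    by (intro emeasure_mono) (use W in measurable)
  also have "\<dots> \<le> ennreal (1/t) * (\<integral>\<^sup>+\<omega>. ennreal (W \<omega>) * indicator (space M) \<omega> \<partial>M)"
    using nn_integral_Markov_inequality[of "\<lambda>\<omega>. ennreal (W \<omega>)" "space M" M "ennreal (1/t)"] W
    by simp
  also have "(\<integral>\<^sup>+\<omega>. ennreal (W \<omega>) * indicator (space M) \<omega> \<partial>M) = (\<integral>\<^sup>+\<omega>. ennreal (W \<omega>) \<partial>M)"
    by (intro nn_integral_cong) (simp add: indicator_def)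
  also have "ennreal (1/t) * \<dots> \<le> ennreal (1/t) * ennreal e"
    using int by (intro mult_left_mono) auto
  also have "\<dots> = ennreal (e / t)"
    using t e by (simp add: ennreal_mult[symmetric])
  finally show ?thesis
    using t e by (simp add: emeasure_eq_measure)
qed

lemma (in prob_space) Markov_union_bound:
  fixes W :: "nat \<Rightarrow> 'a \<Rightarrow> real" and n :: nat and e \<eta> :: real
  assumes Wm: "\<And>i. i < n \<Longrightarrow> W i \<in> borel_measurable M"
    and int: "\<And>i. i < n \<Longrightarrow> (\<integral>\<^sup>+\<omega>. ennreal (W i \<omega>) \<partial>M) \<le> ennreal e"
    and e: "0 \<le> e" and \<eta>: "0 < \<eta>"
  shows "\<exists>A\<in>events. 1 - \<eta> \<le> prob A \<and> (\<forall>\<omega>\<in>A. \<forall>i<n. W i \<omega> \<le> n * e / \<eta>)"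
proof -
  define t where "t = n * e / \<eta>"
  define A where "A = {\<omega>\<in>space M. \<forall>i<n. W i \<omega> \<le> t}"
  define C where "C i = {\<omega>\<in>space M. t < W i \<omega>}" for i
  have C: "C i \<in> events" if "i < n" for i
    unfolding C_def using Wm[OF that] by measurable
  have "A \<in> events"
    unfolding A_def using Wm by measurable
  have prob_C: "prob (C i) \<le> \<eta> / n" if i: "i < n" for i
  proof (cases "e = 0")
    case True
    then have "(\<integral>\<^sup>+\<omega>. ennreal (W i \<omega>) \<partial>M) = 0"
      using int[OF i] by simp
    then have "AE \<omega> in M. ennreal (W i \<omega>) = 0"
      using Wm[OF i] by (subst (asm) nn_integral_0_iff_AE) auto
    then have "AE \<omega> in M. \<omega> \<notin> C i"
      by eventually_elim (use True in \<open>auto simp: C_def t_def\<close>)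
    then have "prob (C i) = 0"
      using C[OF i] by (simp add: prob_eq_0)
    then show ?thesis
      using \<eta> by (simp add: zero_le_divide_iff)
  next
    case False
    then have "0 < t"
      using e i \<eta> by (simp add: t_def)
    then have "prob (C i) \<le> e / t"
      unfolding C_def by (rule prob_greater_le_Markov[OF Wm[OF i] int[OF i] e])
    also have "e / t = \<eta> / n"
      using False \<eta> by (simp add: t_def)
    finally show ?thesis .
  qed
  have "space M - A = (\<Union>i<n. C i)"
    by (auto simp: A_def C_def not_le)
  then have "prob (space M - A) \<le> (\<Sum>i<n. prob (C i))"
    using C by (simp add: finite_measure_subadditive_finite image_subset_iff)
  also have "\<dots> \<le> (\<Sum>i<n. \<eta> / n)"
    by (intro sum_mono prob_C) auto
  also have "\<dots> \<le> \<eta>"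
  proof (cases "n = 0")
    case False
    then show ?thesis by simp
  qed (use \<eta> in simp)
  finally have "1 - \<eta> \<le> prob A"
    using prob_compl[OF \<open>A \<in> events\<close>] by linarith
  moreover have "\<forall>\<omega>\<in>A. \<forall>i<n. W i \<omega> \<le> n * e / \<eta>"
    by (simp add: A_def t_def)
  ultimately show ?thesis
    using \<open>A \<in> events\<close> by blast
qed

lemma (in prob_space) Hoeffding_sum_tail_le:
  fixes W :: "nat \<Rightarrow> 'a \<Rightarrow> real"
  assumes ind: "indep_vars (\<lambda>_. borel) W {..<n}" and n: "0 < n"
    and bnd: "\<And>i \<omega>. i < n \<Longrightarrow> \<omega> \<in> space M \<Longrightarrow> 0 \<le> W i \<omega> \<and> W i \<omega> \<le> K" and K: "0 < K"
    and \<eta>: "0 < \<eta>" "\<eta> < 1"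
  shows "prob {\<omega>\<in>space M. (\<Sum>i<n. expectation (W i)) + n * K * sqrt (- ln \<eta> / (2 * n)) \<le> (\<Sum>i<n. W i \<omega>)}
    \<le> \<eta>"
proof -
  interpret H: Hoeffding_ineq M "{..<n}" W "\<lambda>_. 0" "\<lambda>_. K" "\<Sum>i<n. expectation (W i)"
    by unfold_locales (use ind bnd in auto)
  define s where "s = sqrt (- ln \<eta> / (2 * n))"
  have "0 < - ln \<eta>"
    using \<eta> by simp
  then have "s\<^sup>2 = - ln \<eta> / (2 * n)" "0 \<le> s"
    using n by (simp_all add: s_def divide_le_0_iff)
  then have s2: "real n * (2 * s\<^sup>2) = - ln \<eta>" "0 \<le> s"
    using n by simp_all
  have "prob {\<omega>\<in>space M. (\<Sum>i<n. expectation (W i)) + n * K * s \<le> (\<Sum>i<n. W i \<omega>)}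
      \<le> exp (-2 * (n * K * s)\<^sup>2 / (\<Sum>i<n. (K - 0)\<^sup>2))"
    using n K s2 by (intro H.Hoeffding_ineq_ge) auto
  also have "-2 * (n * K * s)\<^sup>2 / (\<Sum>i<n. (K - 0)\<^sup>2) = ln \<eta>"
    using s2 n K by (simp add: power2_eq_square field_simps)
  finally show ?thesis
    using \<eta> by (simp add: s_def)
qed

lemma (in prob_space) Hoeffding_mean_bound:
  fixes W :: "nat \<Rightarrow> 'a \<Rightarrow> real"
  assumes ind: "indep_vars (\<lambda>_. borel) W {..<n}" and n: "0 < n"
    and bnd: "\<And>i \<omega>. i < n \<Longrightarrow> \<omega> \<in> space M \<Longrightarrow> 0 \<le> W i \<omega> \<and> W i \<omega> \<le> K"
    and ex: "\<And>i. i < n \<Longrightarrow> expectation (W i) \<le> e" and \<eta>: "0 < \<eta>" "\<eta> < 1"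
  shows "\<exists>A\<in>events. 1 - \<eta> \<le> prob A \<and> (\<forall>\<omega>\<in>A. (\<Sum>i<n. W i \<omega>) / n \<le> e + K * sqrt (- ln \<eta> / (2 * n)))"
proof (cases "K = 0")
  case True
  then have "W i \<omega> = 0" if "i < n" "\<omega> \<in> space M" for i \<omega>
    using bnd[OF that] by simp
  moreover have "0 \<le> e"
    using ex[OF n] calculation[OF n] by (simp add: integral_eq_zero_AE[of _ M])
  ultimately show ?thesis
    using True prob_space \<eta> by (intro bexI[of _ "space M"]) auto
next
  case False
  obtain \<omega> where "\<omega> \<in> space M"
    using not_empty by blast
  then have "0 < K"
    using bnd[OF n] False by force
  define s where "s = sqrt (- ln \<eta> / (2 * n))"
  define B where "B = {\<omega>\<in>space M. (\<Sum>i<n. expectation (W i)) + n * K * s \<le> (\<Sum>i<n. W i \<omega>)}"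
  have "prob B \<le> \<eta>"
    unfolding B_def s_def using Hoeffding_sum_tail_le[OF ind n bnd \<open>0 < K\<close> \<eta>] by simp
  have "W i \<in> borel_measurable M" if "i < n" for i
    using ind that unfolding indep_vars_def by auto
  then have "B \<in> events"
    unfolding B_def by measurable
  have "(\<Sum>i<n. W i \<omega>) / n \<le> e + K * s" if "\<omega> \<in> space M - B" for \<omega>
  proof -
    have "(\<Sum>i<n. W i \<omega>) < (\<Sum>i<n. expectation (W i)) + n * K * s"
      using that by (auto simp: B_def)
    also have "(\<Sum>i<n. expectation (W i)) \<le> n * e"
      using sum_mono[of "{..<n}" "\<lambda>i. expectation (W i)" "\<lambda>_. e"] ex by simp
    finally show ?thesis
      using n by (simp add: divide_le_eq algebra_simps)
  qed
  moreover have "1 - \<eta> \<le> prob (space M - B)"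
    using prob_compl[OF \<open>B \<in> events\<close>] \<open>prob B \<le> \<eta>\<close> by linarith
  ultimately show ?thesis
    using \<open>B \<in> events\<close> by (intro bexI[of _ "space M - B"]) (auto simp: s_def)
qed

section \<open>Samples with a bounded density\<close>

lemma powr_add_le_add_powr:
  fixes a b r :: real
  assumes r: "0 < r" "r \<le> 1" and a: "0 \<le> a" and b: "0 \<le> b"
  shows "(a + b) powr r \<le> a powr r + b powr r"
proof (cases "a + b = 0")
  case True
  then show ?thesis using a b by simp
next
  case False
  then have ab: "0 < a + b"
    using a b by simp
  have grow: "x \<le> x powr r" if "0 \<le> x" "x \<le> 1" for x :: real
    using powr_mono'[of r 1 x] that r by simp
  have "1 = a / (a + b) + b / (a + b)"
    using ab by (simp add: add_divide_distrib[symmetric])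
  also have "\<dots> \<le> (a / (a + b)) powr r + (b / (a + b)) powr r"
    using a b ab by (intro add_mono grow) (auto simp: divide_le_eq)
  finally have "1 \<le> (a powr r + b powr r) / (a + b) powr r"
    using a b ab by (simp add: powr_divide add_divide_distrib)
  then show ?thesis
    using ab by (simp add: le_divide_eq)
qed

lemma powr_add_sqrt_le:
  fixes a k v p :: real
  assumes "1 \<le> p" "0 \<le> a" "0 \<le> k" "0 \<le> v"
  shows "(a + k powr p * sqrt v) powr (1/p) \<le> a powr (1/p) + v powr (1 / (2 * p)) * k"
proof -
  have "(a + k powr p * sqrt v) powr (1/p) \<le> a powr (1/p) + (k powr p * sqrt v) powr (1/p)"
    using assms by (intro powr_add_le_add_powr) auto
  also have "(k powr p * sqrt v) powr (1/p) = v powr (1 / (2 * p)) * k"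
    using assms by (simp add: powr_mult powr_powr powr_half_sqrt[symmetric] mult.commute)
  finally show ?thesis .
qed

lemma abs_max_0_diff_le: "\<bar>max (a::real) 0 - max b 0\<bar> \<le> \<bar>a - b\<bar>"
  by (simp add: max_def abs_if)

locale bounded_density_sample = prob_space M for M :: "'a measure" +
  fixes Z :: "nat \<Rightarrow> 'a \<Rightarrow> real" and fZ :: "real \<Rightarrow> real" and n :: nat
  assumes n_pos: "0 < n"
    and indep_Z: "indep_vars (\<lambda>_. borel) Z {..<n}"
    and distr_Z: "\<And>i. i < n \<Longrightarrow> distr M lborel (Z i) = density lborel (\<lambda>x. ennreal (fZ x))"
    and fZ_borel: "fZ \<in> borel_measurable borel"
    and fZ_nonneg: "\<And>x. 0 \<le> fZ x"
    and fZ_bounded: "\<exists>B. \<forall>x. fZ x \<le> B"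
begin

lemma Z_measurable: "i < n \<Longrightarrow> Z i \<in> borel_measurable M"
  using indep_Z unfolding indep_vars_def by auto

lemma sup_norm_density:
  obtains s where "sup_norm fZ = ennreal s" "0 < s" "\<And>x. fZ x \<le> s"
proof -
  obtain B where "\<And>x. fZ x \<le> B"
    using fZ_bounded by blast
  then have "sup_norm fZ \<le> ennreal (max B 0)"
    unfolding sup_norm_def using fZ_nonneg by (intro SUP_least ennreal_leI) (auto simp: le_max_iff_disj)
  then obtain s where s: "sup_norm fZ = ennreal s" "0 \<le> s"
    by (cases "sup_norm fZ") (auto simp: top_unique)
  have le_s: "fZ x \<le> s" for x
  proof -
    have "ennreal \<bar>fZ x\<bar> \<le> sup_norm fZ"
      unfolding sup_norm_def by (rule SUP_upper) auto
    then show ?thesis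
      using s fZ_nonneg[of x] by simp
  qed
  have "0 < s"
  proof (rule ccontr)
    assume "\<not> 0 < s"
    then have "fZ x = 0" for x
      using le_s[of x] fZ_nonneg[of x] by linarith
    then have "(\<lambda>x. ennreal (fZ x)) = (\<lambda>x. 0)"
      by simp
    then have "emeasure (distr M lborel (Z 0)) UNIV = 0"
      using distr_Z[OF n_pos] by (simp add: emeasure_density)
    moreover have "emeasure (distr M lborel (Z 0)) UNIV = 1"
      using Z_measurable[OF n_pos] by (subst emeasure_distr) (auto simp: emeasure_space_1 space_lborel)
    ultimately show False
      by simp
  qed
  then show ?thesis
    using that s le_s by blast
qed

lemma nn_integral_Z_le:
  assumes "i < n" "g \<in> borel_measurable borel"
  shows "(\<integral>\<^sup>+\<omega>. g (Z i \<omega>) \<partial>M) \<le> sup_norm fZ * (\<integral>\<^sup>+x. g x \<partial>lborel)"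
proof -
  have "(\<integral>\<^sup>+\<omega>. g (Z i \<omega>) \<partial>M) = (\<integral>\<^sup>+x. g x \<partial>distr M lborel (Z i))"
    using Z_measurable[OF assms(1)] assms(2) by (subst nn_integral_distr) auto
  also have "\<dots> = (\<integral>\<^sup>+x. ennreal (fZ x) * g x \<partial>lborel)"
    using distr_Z[OF assms(1)] fZ_borel assms(2) by (simp add: nn_integral_density)
  also have "\<dots> \<le> (\<integral>\<^sup>+x. sup_norm fZ * g x \<partial>lborel)"
  proof (intro nn_integral_mono mult_right_mono)
    fix x
    show "ennreal (fZ x) \<le> sup_norm fZ"
      unfolding sup_norm_def using fZ_nonneg[of x] SUP_upper[of x UNIV "\<lambda>x. ennreal \<bar>fZ x\<bar>"] by simp
  qed simp
  also have "\<dots> = sup_norm fZ * (\<integral>\<^sup>+x. g x \<partial>lborel)"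
    using assms(2) by (simp add: nn_integral_cmult)
  finally show ?thesis .
qed

lemma max_moment_event:
  assumes D: "D \<in> borel_measurable borel" and \<eta>: "0 < \<eta>"
    and l: "(\<integral>\<^sup>+x. ennreal (\<bar>D x\<bar> powr p) \<partial>lborel) = ennreal l" "0 \<le> l"
  shows "\<exists>A\<in>events. 1 - \<eta> \<le> prob A \<and>
    (\<forall>\<omega>\<in>A. \<forall>i<n. \<bar>D (Z i \<omega>)\<bar> powr p \<le> n * (enn2real (sup_norm fZ) * l) / \<eta>)"
proof -
  obtain s where s: "sup_norm fZ = ennreal s" "0 < s"
    using sup_norm_density by blast
  define W where "W i \<omega> = \<bar>D (Z i \<omega>)\<bar> powr p" for i \<omega>
  have "W i \<in> borel_measurable M" if "i < n" for i
    unfolding W_def using Z_measurable[OF that] D by measurable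
  moreover have "(\<integral>\<^sup>+\<omega>. ennreal (W i \<omega>) \<partial>M) \<le> ennreal (s * l)" if "i < n" for i
    using nn_integral_Z_le[OF that, of "\<lambda>x. ennreal (\<bar>D x\<bar> powr p)"] D s l
    by (simp add: W_def less_imp_le flip: ennreal_mult)
  ultimately show ?thesis
    using Markov_union_bound[where W=W and n=n and e="s * l" and \<eta>=\<eta>] s l \<eta> by (simp add: W_def)
qed

lemma max_abs_le_event:
  assumes D: "D \<in> borel_measurable borel" and p: "1 \<le> p" and \<eta>: "0 < \<eta>"
  shows "\<exists>A\<in>events. 1 - \<eta> \<le> prob A \<and> (\<forall>\<omega>\<in>A. \<forall>i<n. ennreal \<bar>D (Z i \<omega>)\<bar>
    \<le> enn_powr (sup_norm fZ / ennreal \<eta>) (1/p) * enn_powr (ennreal n) (1/p) * Lp_norm lborel p D)"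
    (is "\<exists>A\<in>events. _ \<and> (\<forall>\<omega>\<in>A. \<forall>i<n. _ \<le> ?R)")
proof -
  obtain s where s: "sup_norm fZ = ennreal s" "0 < s"
    using sup_norm_density by blast
  define L where "L = (\<integral>\<^sup>+x. ennreal (\<bar>D x\<bar> powr p) \<partial>lborel)"
  have "sup_norm fZ / ennreal \<eta> = ennreal (s / \<eta>)"
    using s \<eta> by (simp add: divide_ennreal)
  then have R: "?R = enn_powr (ennreal (s / \<eta>) * ennreal n * L) (1/p)"
    by (simp add: Lp_norm_def L_def enn_powr_mult)
  show ?thesis
  proof (cases "L = top")
    case True
    then have "?R = top"
      unfolding R using s \<eta> n_pos by (simp add: ennreal_mult_top)
    then show ?thesis
      using prob_space \<eta> by (intro bexI[of _ "space M"]) auto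
  next
    case False
    then obtain l where l: "L = ennreal l" "0 \<le> l"
      by (cases L) auto
    then obtain A where A: "A \<in> events" "1 - \<eta> \<le> prob A"
      and moment: "\<forall>\<omega>\<in>A. \<forall>i<n. \<bar>D (Z i \<omega>)\<bar> powr p \<le> n * (s * l) / \<eta>"
      using max_moment_event[OF D \<eta> l[unfolded L_def]] s by auto
    have "ennreal \<bar>D (Z i \<omega>)\<bar> \<le> ?R" if "\<omega> \<in> A" "i < n" for \<omega> i
    proof -
      have "\<bar>D (Z i \<omega>)\<bar> = (\<bar>D (Z i \<omega>)\<bar> powr p) powr (1/p)"
        using p by (simp add: powr_powr)
      also have "\<dots> \<le> (n * (s * l) / \<eta>) powr (1/p)"
        using moment that p by (intro powr_mono2) auto
      also have "n * (s * l) / \<eta> = s / \<eta> * n * l"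
        by simp
      finally show ?thesis
        unfolding R using s l \<eta> by (simp add: enn_powr_ennreal flip: ennreal_mult)
    qed
    then show ?thesis
      using A by blast
  qed
qed

lemma exposure_estimate_event:
  assumes P: "prob_space P" "atomless P"
    and VU: "V \<in> borel_measurable borel" "U \<in> borel_measurable borel" and p: "1 \<le> p" and \<eta>: "0 < \<eta>"
  shows "\<exists>A\<in>sets M. measure M A \<ge> 1 - \<eta> \<and>
      (\<forall>\<omega>\<in>A. \<forall>\<rho>. exposure_measure P \<rho> \<and> law_invariant P \<rho> \<longrightarrow>
        (let X = (\<lambda>i. max (V (Z i \<omega>)) 0); Y = (\<lambda>i. max (U (Z i \<omega>)) 0);
             R = enn2ereal (enn_powr (sup_norm fZ / ennreal \<eta>) (1 / p)
                    * enn_powr (ennreal (real n)) (1 / p) * Lp_norm lborel p (\<lambda>x. V x - U x))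
         in rho_hat P \<rho> n X \<le> rho_hat P \<rho> n Y + R \<and>
            rho_hat P \<rho> n Y \<le> rho_hat P \<rho> n X + R))"
proof -
  define R where "R = enn_powr (sup_norm fZ / ennreal \<eta>) (1 / p)
    * enn_powr (ennreal (real n)) (1 / p) * Lp_norm lborel p (\<lambda>x. V x - U x)"
  obtain A where A: "A \<in> events" "1 - \<eta> \<le> prob A"
    and close: "\<And>\<omega> i. \<omega> \<in> A \<Longrightarrow> i < n \<Longrightarrow> ennreal \<bar>V (Z i \<omega>) - U (Z i \<omega>)\<bar> \<le> R"
    using max_abs_le_event[of "\<lambda>x. V x - U x" p \<eta>] VU p \<eta> unfolding R_def by auto
  have all: "\<forall>\<omega>\<in>A. \<forall>\<rho>. exposure_measure P \<rho> \<and> law_invariant P \<rho> \<longrightarrow>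
      rho_hat P \<rho> n (\<lambda>i. max (V (Z i \<omega>)) 0) \<le> rho_hat P \<rho> n (\<lambda>i. max (U (Z i \<omega>)) 0) + enn2ereal R \<and>
      rho_hat P \<rho> n (\<lambda>i. max (U (Z i \<omega>)) 0) \<le> rho_hat P \<rho> n (\<lambda>i. max (V (Z i \<omega>)) 0) + enn2ereal R"
  proof (intro ballI allI impI)
    fix \<omega> \<rho> assume \<omega>: "\<omega> \<in> A" and \<rho>: "exposure_measure P \<rho> \<and> law_invariant P \<rho>"
    have "ennreal \<bar>max (V (Z i \<omega>)) 0 - max (U (Z i \<omega>)) 0\<bar> \<le> R" if "i < n" for i
      using abs_max_0_diff_le close[OF \<omega> that] by (meson ennreal_leI order_trans)
    then show "rho_hat P \<rho> n (\<lambda>i. max (V (Z i \<omega>)) 0) \<le> rho_hat P \<rho> n (\<lambda>i. max (U (Z i \<omega>)) 0) + enn2ereal R \<and>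
      rho_hat P \<rho> n (\<lambda>i. max (U (Z i \<omega>)) 0) \<le> rho_hat P \<rho> n (\<lambda>i. max (V (Z i \<omega>)) 0) + enn2ereal R"
      using prob_space.rho_hat_le_add_enn2ereal[OF P n_pos] \<rho> by (simp add: abs_minus_commute)
  qed
  show ?thesis
    unfolding Let_def R_def[symmetric] by (rule bexI[of _ A], rule conjI[OF A(2)], rule all, rule A(1))
qed

lemma empirical_moment_event:
  assumes D: "D \<in> borel_measurable borel" and p: "1 \<le> p" and \<eta>: "0 < \<eta>" "\<eta> < 1"
    and l: "(\<integral>\<^sup>+x. ennreal (\<bar>D x\<bar> powr p) \<partial>lborel) = ennreal l" "0 \<le> l" and k: "\<And>x. \<bar>D x\<bar> \<le> k"
  shows "\<exists>A\<in>events. 1 - \<eta> \<le> prob A \<and> (\<forall>\<omega>\<in>A.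
    (\<Sum>j<n. \<bar>D (Z j \<omega>)\<bar> powr p) / n \<le> enn2real (sup_norm fZ) * l + k powr p * sqrt (- ln \<eta> / (2 * n)))"
proof -
  obtain s where s: "sup_norm fZ = ennreal s" "0 < s"
    using sup_norm_density by blast
  define W where "W i \<omega> = \<bar>D (Z i \<omega>)\<bar> powr p" for i \<omega>
  have Wm: "W i \<in> borel_measurable M" if "i < n" for i
    unfolding W_def using Z_measurable[OF that] D by measurable
  have "indep_vars (\<lambda>_. borel) W {..<n}"
    unfolding W_def by (rule indep_vars_compose2[OF indep_Z, where Y="\<lambda>_ z. \<bar>D z\<bar> powr p", simplified])
      (use D in measurable)
  moreover have "0 \<le> W i \<omega> \<and> W i \<omega> \<le> k powr p" for i \<omega>
    unfolding W_def using k p by (auto intro!: powr_mono2)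
  moreover have "expectation (W i) \<le> s * l" if "i < n" for i
  proof -
    have "expectation (W i) = enn2real (\<integral>\<^sup>+\<omega>. ennreal (W i \<omega>) \<partial>M)"
      using Wm[OF that] by (rule integral_eq_nn_integral) (simp add: W_def)
    also have "\<dots> \<le> enn2real (ennreal (s * l))"
      using nn_integral_Z_le[OF that, of "\<lambda>x. ennreal (\<bar>D x\<bar> powr p)"] D s l
      by (intro enn2real_mono) (auto simp: W_def less_imp_le simp flip: ennreal_mult)
    finally show ?thesis
      using s l by simp
  qed
  ultimately show ?thesis
    using Hoeffding_mean_bound[of W n "k powr p" "s * l" \<eta>] n_pos \<eta> s by (simp add: W_def)
qed

lemma empirical_Lp_event:
  assumes D: "D \<in> borel_measurable borel" and p: "1 \<le> p" and \<eta>: "0 < \<eta>" "\<eta> < 1"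
  shows "\<exists>A\<in>events. 1 - \<eta> \<le> prob A \<and> (\<forall>\<omega>\<in>A.
    ennreal (((\<Sum>j<n. \<bar>D (Z j \<omega>)\<bar> powr p) / n) powr (1/p))
      \<le> enn_powr (sup_norm fZ) (1/p) * Lp_norm lborel p D
        + ennreal ((- ln \<eta> / n) powr (1 / (2 * p))) * sup_norm D)"
    (is "\<exists>A\<in>events. _ \<and> (\<forall>\<omega>\<in>A. _ \<le> ?T)")
proof (cases "?T = top")
  case True
  then show ?thesis
    using prob_space \<eta> by (intro bexI[of _ "space M"]) auto
next
  case False
  obtain s where s: "sup_norm fZ = ennreal s" "0 < s"
    using sup_norm_density by blast
  define c where "c = (- ln \<eta> / n) powr (1 / (2 * p))"
  have c: "0 < c"
    using \<eta> n_pos by (simp add: c_def)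
  define L where "L = (\<integral>\<^sup>+x. ennreal (\<bar>D x\<bar> powr p) \<partial>lborel)"
  have "L \<noteq> top" "sup_norm D \<noteq> top"
    using False s c by (auto simp: Lp_norm_def L_def[symmetric] enn_powr_ennreal ennreal_mult_top c_def)
  then obtain l k where l: "L = ennreal l" "0 \<le> l" and k: "sup_norm D = ennreal k" "0 \<le> k"
    by (cases L; cases "sup_norm D") auto
  have "ennreal \<bar>D x\<bar> \<le> ennreal k" for x
    unfolding k(1)[symmetric] sup_norm_def by (rule SUP_upper) auto
  then obtain A where A: "A \<in> events" "1 - \<eta> \<le> prob A" and mean: "\<forall>\<omega>\<in>A.
      (\<Sum>j<n. \<bar>D (Z j \<omega>)\<bar> powr p) / n \<le> s * l + k powr p * sqrt (- ln \<eta> / (2 * n))"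
    using empirical_moment_event[OF D p \<eta> l[unfolded L_def], of k] k s by auto
  have T: "?T = ennreal (s powr (1/p) * l powr (1/p) + c * k)"
    using s l k c by (simp add: Lp_norm_def L_def[symmetric] enn_powr_ennreal c_def ennreal_plus ennreal_mult)
  have "ennreal (((\<Sum>j<n. \<bar>D (Z j \<omega>)\<bar> powr p) / n) powr (1/p)) \<le> ?T" if "\<omega> \<in> A" for \<omega>
  proof -
    have "((\<Sum>j<n. \<bar>D (Z j \<omega>)\<bar> powr p) / n) powr (1/p) \<le> (s * l + k powr p * sqrt (- ln \<eta> / (2 * n))) powr (1/p)"
      using mean that p by (intro powr_mono2) (auto intro!: divide_nonneg_nonneg sum_nonneg)
    also have "\<dots> \<le> (s * l) powr (1/p) + (- ln \<eta> / (2 * n)) powr (1 / (2 * p)) * k"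
      using p s l k \<eta> by (intro powr_add_sqrt_le) (auto simp: divide_le_0_iff)
    also have "\<dots> \<le> s powr (1/p) * l powr (1/p) + c * k"
      using p k \<eta> n_pos unfolding c_def powr_mult
      by (intro add_left_mono mult_right_mono powr_mono2) (auto simp: divide_le_eq)
    finally show ?thesis
      unfolding T by (rule ennreal_leI)
  qed
  then show ?thesis
    using A by blast
qed

lemma quantile_estimate_event:
  assumes VU: "V \<in> borel_measurable borel" "U \<in> borel_measurable borel"
    and p: "1 \<le> p" and \<eta>: "0 < \<eta>" "\<eta> \<le> 1"
  shows "\<exists>A\<in>sets M. measure M A \<ge> 1 - \<eta> \<and>
      (\<forall>\<omega>\<in>A. \<forall>fm (q::ereal). quantile_density fm \<and> 1 \<le> q \<and> 1 / ereal p + 1 / q = 1 \<longrightarrow>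
        (let X = (\<lambda>i. max (V (Z i \<omega>)) 0); Y = (\<lambda>i. max (U (Z i \<omega>)) 0)
         in ennreal \<bar>rho_m_hat fm n X - rho_m_hat fm n Y\<bar>
            \<le> Lq_norm_01 q fm * enn_powr (sup_norm fZ) (1 / p) * Lp_norm lborel p (\<lambda>x. V x - U x)
              + ennreal ((- ln \<eta> / real n) powr (1 / (2 * p)))
                  * Lq_norm_01 q fm * sup_norm (\<lambda>x. V x - U x)))"
proof (cases "\<eta> = 1")
  case True
  then show ?thesis
    by (intro bexI[of _ "{}"]) auto
next
  case False
  define T where "T = enn_powr (sup_norm fZ) (1/p) * Lp_norm lborel p (\<lambda>x. V x - U x)
    + ennreal ((- ln \<eta> / n) powr (1 / (2 * p))) * sup_norm (\<lambda>x. V x - U x)"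
  obtain A where A: "A \<in> events" "1 - \<eta> \<le> prob A" and mean: "\<forall>\<omega>\<in>A.
      ennreal (((\<Sum>j<n. \<bar>V (Z j \<omega>) - U (Z j \<omega>)\<bar> powr p) / n) powr (1/p)) \<le> T"
    using empirical_Lp_event[of "\<lambda>x. V x - U x" p \<eta>] VU p \<eta> False unfolding T_def by auto
  have all: "\<forall>\<omega>\<in>A. \<forall>fm (q::ereal). quantile_density fm \<and> 1 \<le> q \<and> 1 / ereal p + 1 / q = 1 \<longrightarrow>
      ennreal \<bar>rho_m_hat fm n (\<lambda>i. max (V (Z i \<omega>)) 0) - rho_m_hat fm n (\<lambda>i. max (U (Z i \<omega>)) 0)\<bar>
        \<le> Lq_norm_01 q fm * T"
  proof (intro ballI allI impI)
    fix \<omega> fm and q :: ereal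
    assume \<omega>: "\<omega> \<in> A" and fq: "quantile_density fm \<and> 1 \<le> q \<and> 1 / ereal p + 1 / q = 1"
    let ?X = "\<lambda>i. max (V (Z i \<omega>)) 0" and ?Y = "\<lambda>i. max (U (Z i \<omega>)) 0"
    have "ennreal \<bar>rho_m_hat fm n ?X - rho_m_hat fm n ?Y\<bar>
        \<le> Lq_norm_01 q fm * ennreal (((\<Sum>j<n. \<bar>?X j - ?Y j\<bar> powr p) / n) powr (1/p))"
      using fq p n_pos by (intro rho_m_hat_diff_le) (auto simp: quantile_density_def)
    also have "\<dots> \<le> Lq_norm_01 q fm * ennreal (((\<Sum>j<n. \<bar>V (Z j \<omega>) - U (Z j \<omega>)\<bar> powr p) / n) powr (1/p))"
      using abs_max_0_diff_le p
      by (intro mult_left_mono ennreal_leI powr_mono2 divide_right_mono sum_mono)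
        (auto intro!: divide_nonneg_nonneg sum_nonneg)
    also have "\<dots> \<le> Lq_norm_01 q fm * T"
      using mean \<omega> by (intro mult_left_mono) auto
    finally show "ennreal \<bar>rho_m_hat fm n ?X - rho_m_hat fm n ?Y\<bar> \<le> Lq_norm_01 q fm * T" .
  qed
  have expand: "Lq_norm_01 q fm * T = Lq_norm_01 q fm * enn_powr (sup_norm fZ) (1 / p) * Lp_norm lborel p (\<lambda>x. V x - U x)
      + ennreal ((- ln \<eta> / real n) powr (1 / (2 * p))) * Lq_norm_01 q fm * sup_norm (\<lambda>x. V x - U x)" for q fm
    by (simp add: T_def distrib_left mult_ac)
  show ?thesis
    unfolding Let_def expand[symmetric] by (rule bexI[of _ A], rule conjI[OF A(2)], rule all, rule A(1))
qed

end

theorem proposition3p2: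
  fixes M :: "'a measure" and P :: "'b measure"
    and Z :: "nat \<Rightarrow> 'a \<Rightarrow> real" and fZ V U :: "real \<Rightarrow> real"
    and n :: nat and p \<eta> :: real
  assumes "prob_space M"
    and "prob_space P" and "atomless P"
    and "0 < n"
    and "prob_space.indep_vars M (\<lambda>_. borel) Z {..<n}"
    and "\<forall>i<n. distr M lborel (Z i) = density lborel (\<lambda>x. ennreal (fZ x))"
    and "fZ \<in> borel_measurable borel" and "\<forall>x. 0 \<le> fZ x" and "\<exists>B. \<forall>x. fZ x \<le> B"
    and "V \<in> borel_measurable borel" and "U \<in> borel_measurable borel"
    and "1 \<le> p" and "0 < \<eta>" and "\<eta> \<le> 1"
  shows
   "(\<exists>A\<in>sets M. measure M A \<ge> 1 - \<eta> \<and>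
      (\<forall>\<omega>\<in>A. \<forall>\<rho>. exposure_measure P \<rho> \<and> law_invariant P \<rho> \<longrightarrow>
        (let X = (\<lambda>i. max (V (Z i \<omega>)) 0); Y = (\<lambda>i. max (U (Z i \<omega>)) 0);
             R = enn2ereal (enn_powr (sup_norm fZ / ennreal \<eta>) (1 / p)
                    * enn_powr (ennreal (real n)) (1 / p) * Lp_norm lborel p (\<lambda>x. V x - U x))
         in rho_hat P \<rho> n X \<le> rho_hat P \<rho> n Y + R \<and>
            rho_hat P \<rho> n Y \<le> rho_hat P \<rho> n X + R)))
    \<and>
    (\<exists>A\<in>sets M. measure M A \<ge> 1 - \<eta> \<and>
      (\<forall>\<omega>\<in>A. \<forall>fm (q::ereal). quantile_density fm \<and> 1 \<le> q \<and> 1 / ereal p + 1 / q = 1 \<longrightarrow>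
        (let X = (\<lambda>i. max (V (Z i \<omega>)) 0); Y = (\<lambda>i. max (U (Z i \<omega>)) 0)
         in ennreal \<bar>rho_m_hat fm n X - rho_m_hat fm n Y\<bar>
            \<le> Lq_norm_01 q fm * enn_powr (sup_norm fZ) (1 / p) * Lp_norm lborel p (\<lambda>x. V x - U x)
              + ennreal ((- ln \<eta> / real n) powr (1 / (2 * p)))
                  * Lq_norm_01 q fm * sup_norm (\<lambda>x. V x - U x))))"
proof -
  have "bounded_density_sample M Z fZ n"
    unfolding bounded_density_sample_def bounded_density_sample_axioms_def
    using assms(1,4-9) by blast
  then interpret bounded_density_sample M Z fZ n .
  show ?thesis
    using exposure_estimate_event[OF assms(2,3,10-13)] quantile_estimate_event[OF assms(10-14)] by (rule conjI)
qed

end
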